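(* Let $\boldsymbol x^*$ be a pure Nash equilibrium of $\mathcal L(n,S)$ satisfying the vertex property. Then there exists $\xi>0$ such that for every $\boldsymbol x^*$-saturated location $w$ and every edge $e$ incident on $w$, we have $\delta(w,e)=\xi$. Moreover, every player located at an $\boldsymbol x^*$-saturated location has payoff $\xi$.
   Context: Network: $(V,E)$ is a finite connected graph with no vertex of degree $2$; each edge $e$ has a length $\lambda(e)>0$. $S$ is the metric measure space obtained by identifying each edge with a segment of length $\lambda(e)$, with length measure $\lambda$ and shortest-path distance $d$. Vertices have their graph degree, and interior points of edges have degree $2$. If $w$ is an interior point of an edge, that edge is regarded as split at $w$ into two edges incident on $w$. Location game $\mathcal L(n,S)$: $n$ players each choose a point of $S$. Consumers are distributed according to $\lambda$, and each shops at a closest occupied location. Consumers equidistant from several closest occupied locations are split equally among those locations, and the share of a location is split equally among the players located there. Payoff is the mass of consumers attracted. Nash equilibria are pure. Vertex property: every vertex of degree $\ge3$ is occupied. $w$ is $\boldsymbol x$-saturated if $\operatorname{card}\{i:x_i=w\}=\operatorname{degree}(w)$. For an occupied point $w$ and an edge $e$ incident on $w$: - If the other endpoint of $e$ is a leaf and no player lies on $e$ except at $w$, then $\delta(w,e)=\lambda(e)$. - Otherwise, $\delta(w,e)=d(w,c(e))/2$, where $c(e)$ is the location of the closest player to $w$ on $e$ other than at $w$. Thus $\delta(w,e)$ is the mass of consumers on $e$ served by location $w$. *)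

theory Defs
  imports "HOL-Analysis.Analysis"
begin

text \<open>A point of S is either a vertex Vx v, or an interior point Ip e t of edge e at
  coordinate t (0 < t < len e) measured from the endpoint fst (ends e).\<close>

datatype ('v,'e) point = Vx 'v | Ip 'e real

definition vdeg :: "'e set \<Rightarrow> ('e \<Rightarrow> 'v \<times> 'v) \<Rightarrow> 'v \<Rightarrow> nat" where
  "vdeg E ends v = card {e\<in>E. v = fst (ends e) \<or> v = snd (ends e)}"

inductive walk :: "'v set \<Rightarrow> 'e set \<Rightarrow> ('e \<Rightarrow> 'v \<times> 'v) \<Rightarrow> ('e \<Rightarrow> real) \<Rightarrow> 'v \<Rightarrow> real \<Rightarrow> 'v \<Rightarrow> bool"
  for V E ends len where
  wnil: "v \<in> V \<Longrightarrow> walk V E ends len v 0 v"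
| wcons: "e \<in> E \<Longrightarrow> (ends e = (a, b) \<or> ends e = (b, a)) \<Longrightarrow> walk V E ends len b l c
           \<Longrightarrow> walk V E ends len a (len e + l) c"

definition network :: "'v set \<Rightarrow> 'e set \<Rightarrow> ('e \<Rightarrow> 'v \<times> 'v) \<Rightarrow> ('e \<Rightarrow> real) \<Rightarrow> bool" where
  "network V E ends len \<longleftrightarrow> finite V \<and> V \<noteq> {} \<and> finite E \<and>
     (\<forall>e\<in>E. fst (ends e) \<in> V \<and> snd (ends e) \<in> V \<and> fst (ends e) \<noteq> snd (ends e) \<and> len e > 0) \<and>
     inj_on (\<lambda>e. {fst (ends e), snd (ends e)}) E \<and>
     (\<forall>u\<in>V. \<forall>v\<in>V. \<exists>l. walk V E ends len u l v) \<and>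
     (\<forall>v\<in>V. vdeg E ends v \<noteq> 2)"

fun valid_pt :: "'v set \<Rightarrow> 'e set \<Rightarrow> ('e \<Rightarrow> real) \<Rightarrow> ('v,'e) point \<Rightarrow> bool" where
  "valid_pt V E len (Vx v) = (v \<in> V)"
| "valid_pt V E len (Ip e t) = (e \<in> E \<and> 0 < t \<and> t < len e)"

fun pdeg :: "'e set \<Rightarrow> ('e \<Rightarrow> 'v \<times> 'v) \<Rightarrow> ('v,'e) point \<Rightarrow> nat" where
  "pdeg E ends (Vx v) = vdeg E ends v"
| "pdeg E ends (Ip e t) = 2"

definition dV :: "'v set \<Rightarrow> 'e set \<Rightarrow> ('e \<Rightarrow> 'v \<times> 'v) \<Rightarrow> ('e \<Rightarrow> real) \<Rightarrow> 'v \<Rightarrow> 'v \<Rightarrow> real" where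
  "dV V E ends len u v = Inf {l. walk V E ends len u l v}"

fun anchors :: "('e \<Rightarrow> 'v \<times> 'v) \<Rightarrow> ('e \<Rightarrow> real) \<Rightarrow> ('v,'e) point \<Rightarrow> ('v \<times> real) set" where
  "anchors ends len (Vx v) = {(v, 0)}"
| "anchors ends len (Ip e t) = {(fst (ends e), t), (snd (ends e), len e - t)}"

definition pdist :: "'v set \<Rightarrow> 'e set \<Rightarrow> ('e \<Rightarrow> 'v \<times> 'v) \<Rightarrow> ('e \<Rightarrow> real) \<Rightarrow> ('v,'e) point \<Rightarrow> ('v,'e) point \<Rightarrow> real" where
  "pdist V E ends len p q = Min
     ({a + dV V E ends len u v + b | u a v b. (u, a) \<in> anchors ends len p \<and> (v, b) \<in> anchors ends len q}
      \<union> (case (p, q) of (Ip e t, Ip e' s) \<Rightarrow> (if e = e' then {\<bar>t - s\<bar>} else {}) | _ \<Rightarrow> {}))"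

definition closest :: "'v set \<Rightarrow> 'e set \<Rightarrow> ('e \<Rightarrow> 'v \<times> 'v) \<Rightarrow> ('e \<Rightarrow> real) \<Rightarrow> nat \<Rightarrow> (nat \<Rightarrow> ('v,'e) point) \<Rightarrow> ('v,'e) point \<Rightarrow> ('v,'e) point set" where
  "closest V E ends len n x y =
     (let m = Min {pdist V E ends len y (x j) | j. j < n}
      in {x j | j. j < n \<and> pdist V E ends len y (x j) = m})"

definition share :: "'v set \<Rightarrow> 'e set \<Rightarrow> ('e \<Rightarrow> 'v \<times> 'v) \<Rightarrow> ('e \<Rightarrow> real) \<Rightarrow> nat \<Rightarrow> (nat \<Rightarrow> ('v,'e) point) \<Rightarrow> nat \<Rightarrow> ('v,'e) point \<Rightarrow> real" where
  "share V E ends len n x i y =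
     (if x i \<in> closest V E ends len n x y
      then (1 / real (card (closest V E ends len n x y))) * (1 / real (card {j. j < n \<and> x j = x i}))
      else 0)"

definition payoff :: "'v set \<Rightarrow> 'e set \<Rightarrow> ('e \<Rightarrow> 'v \<times> 'v) \<Rightarrow> ('e \<Rightarrow> real) \<Rightarrow> nat \<Rightarrow> (nat \<Rightarrow> ('v,'e) point) \<Rightarrow> nat \<Rightarrow> real" where
  "payoff V E ends len n x i = (\<Sum>e\<in>E. integral {0..len e} (\<lambda>t. share V E ends len n x i (Ip e t)))"

definition nash :: "'v set \<Rightarrow> 'e set \<Rightarrow> ('e \<Rightarrow> 'v \<times> 'v) \<Rightarrow> ('e \<Rightarrow> real) \<Rightarrow> nat \<Rightarrow> (nat \<Rightarrow> ('v,'e) point) \<Rightarrow> bool" where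
  "nash V E ends len n x \<longleftrightarrow> (\<forall>i<n. valid_pt V E len (x i)) \<and>
     (\<forall>i<n. \<forall>p. valid_pt V E len p \<longrightarrow>
        payoff V E ends len n (x(i := p)) i \<le> payoff V E ends len n x i)"

definition vertex_property :: "'v set \<Rightarrow> 'e set \<Rightarrow> ('e \<Rightarrow> 'v \<times> 'v) \<Rightarrow> nat \<Rightarrow> (nat \<Rightarrow> ('v,'e) point) \<Rightarrow> bool" where
  "vertex_property V E ends n x \<longleftrightarrow> (\<forall>v\<in>V. vdeg E ends v \<ge> 3 \<longrightarrow> (\<exists>i<n. x i = Vx v))"

definition saturated :: "'v set \<Rightarrow> 'e set \<Rightarrow> ('e \<Rightarrow> 'v \<times> 'v) \<Rightarrow> ('e \<Rightarrow> real) \<Rightarrow> nat \<Rightarrow> (nat \<Rightarrow> ('v,'e) point) \<Rightarrow> ('v,'e) point \<Rightarrow> bool" where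
  "saturated V E ends len n x w \<longleftrightarrow> valid_pt V E len w \<and> card {i. i < n \<and> x i = w} = pdeg E ends w"

text \<open>Edges incident on w (after splitting at interior w): a pair (e, b) is the part of
  edge e starting at w and heading towards endpoint snd (ends e) if b, fst (ends e) otherwise.\<close>
definition dirs :: "'e set \<Rightarrow> ('e \<Rightarrow> 'v \<times> 'v) \<Rightarrow> ('v,'e) point \<Rightarrow> ('e \<times> bool) set" where
  "dirs E ends w = (case w of
      Vx v \<Rightarrow> {(e, v = fst (ends e)) | e. e \<in> E \<and> (v = fst (ends e) \<or> v = snd (ends e))}
    | Ip e t \<Rightarrow> {(e, True), (e, False)})"

definition coord :: "('e \<Rightarrow> 'v \<times> 'v) \<Rightarrow> ('e \<Rightarrow> real) \<Rightarrow> ('v,'e) point \<Rightarrow> 'e \<Rightarrow> real" where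
  "coord ends len w e = (case w of Vx v \<Rightarrow> (if v = fst (ends e) then 0 else len e) | Ip e' t \<Rightarrow> t)"

definition farv :: "('e \<Rightarrow> 'v \<times> 'v) \<Rightarrow> 'e \<Rightarrow> bool \<Rightarrow> 'v" where
  "farv ends e b = (if b then snd (ends e) else fst (ends e))"

definition farc :: "('e \<Rightarrow> real) \<Rightarrow> 'e \<Rightarrow> bool \<Rightarrow> real" where
  "farc len e b = (if b then len e else 0)"

definition on_seg :: "('e \<Rightarrow> 'v \<times> 'v) \<Rightarrow> ('e \<Rightarrow> real) \<Rightarrow> ('v,'e) point \<Rightarrow> 'e \<Rightarrow> bool \<Rightarrow> ('v,'e) point \<Rightarrow> bool" where
  "on_seg ends len w e b q \<longleftrightarrow> q = Vx (farv ends e b) \<or>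
     (\<exists>s. q = Ip e s \<and> (if b then coord ends len w e < s \<and> s < len e else 0 < s \<and> s < coord ends len w e))"

definition delta :: "'v set \<Rightarrow> 'e set \<Rightarrow> ('e \<Rightarrow> 'v \<times> 'v) \<Rightarrow> ('e \<Rightarrow> real) \<Rightarrow> nat \<Rightarrow> (nat \<Rightarrow> ('v,'e) point) \<Rightarrow> ('v,'e) point \<Rightarrow> 'e \<times> bool \<Rightarrow> real" where
  "delta V E ends len n x w eb = (case eb of (e, b) \<Rightarrow>
     (let P = {j. j < n \<and> on_seg ends len w e b (x j)} in
      if vdeg E ends (farv ends e b) = 1 \<and> P = {}
      then \<bar>farc len e b - coord ends len w e\<bar>
      else Min {pdist V E ends len w (x j) | j. j \<in> P} / 2))"

end

theory Submission
  imports Defs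
begin

text \<open>For a location w and a direction (e, b) at w, let the reach of w be half the distance along the
  direction to the next player, or the whole direction if it runs into an empty leaf. Every consumer
  attracted by a player at w lies within reach of w and is shared by the k players at w, so that
  player earns at most the sum of the reaches over the directions, divided by k. Conversely, a
  player stepping a small distance from w into a direction wins almost the reach of w with respect
  to the others, so in equilibrium no reach exceeds the payoff. At a saturated location k is the
  number of directions, which forces every reach to equal the payoff.

  By the vertex property, and as no vertex has degree 2, every direction ends in a leaf or at an
  occupied vertex. Hence all other players are at distance at least twice the payoff from a
  saturated location, and \<delta> (measured in S) equals the reach there. Finally a player of one
  saturated location may step into a direction at another one and earn its reach there, so all
  saturated locations yield the same payoff.\<close>

lemma inverse_nat_le_1: "1 / real (k::nat) \<le> 1"
  by (cases k) auto

lemma has_integral_indicator_Icc: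
  assumes "0 \<le> a" "a \<le> b" "b \<le> (L::real)"
  shows "((\<lambda>t. if a \<le> t \<and> t \<le> b then c else 0) has_integral c * (b - a)) {0..L}"
proof -
  have "((\<lambda>t. c) has_integral c * (b - a)) {a..b}"
    using has_integral_const_real[of c a b] assms by (simp add: mult.commute)
  then have "((\<lambda>t. if t \<in> {a..b} then c else 0) has_integral c * (b - a)) {0..L}"
    unfolding has_integral_restrict_Int using assms by (simp add: Int_absorb2)
  then show ?thesis by simp
qed

lemma has_integral_indicator_Ioo:
  assumes "0 \<le> a" "a \<le> b" "b \<le> (L::real)"
  shows "((\<lambda>t. if a < t \<and> t < b then c else 0) has_integral c * (b - a)) {0..L}"
  by (rule has_integral_spike_finite[of "{a, b}", OF _ _ has_integral_indicator_Icc[OF assms]]) auto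

lemma continuous_on_Min_family:
  fixes f :: "nat \<Rightarrow> real \<Rightarrow> real"
  assumes "finite J" "J \<noteq> {}" "\<And>j. j \<in> J \<Longrightarrow> continuous_on UNIV (f j)"
  shows "continuous_on UNIV (\<lambda>t. Min ((\<lambda>j. f j t) ` J))"
  using assms by (induction J rule: finite_ne_induct) (simp_all add: continuous_on_min)

lemma measurable_argmin_set:
  fixes f :: "nat \<Rightarrow> real \<Rightarrow> real"
  assumes cont: "\<And>j. continuous_on UNIV (f j)"
  shows "(\<lambda>t. {j. j < n \<and> f j t = Min ((\<lambda>k. f k t) ` {..<n})}) \<in> borel \<rightarrow>\<^sub>M count_space (Pow {..<n})"
    (is "?J \<in> _")
proof (cases "n = 0")
  case False
  define C where "C j = {t. f j t = Min ((\<lambda>k. f k t) ` {..<n})}" for j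
  have "continuous_on UNIV (\<lambda>t. Min ((\<lambda>k. f k t) ` {..<n}))"
    using False cont by (intro continuous_on_Min_family) auto
  then have closed_C: "closed (C j)" for j unfolding C_def by (rule closed_Collect_eq[OF cont])
  have "?J -` {S} \<inter> space borel \<in> sets borel" if "S \<subseteq> {..<n}" for S
  proof -
    have "?J -` {S} \<inter> space borel = (\<Inter>j\<in>S. C j) \<inter> (\<Inter>j\<in>{..<n} - S. - C j)"
      using that by (auto simp: C_def)
    moreover have "closed (\<Inter>j\<in>S. C j)" "open (\<Inter>j\<in>{..<n} - S. - C j)"
      using closed_C by (auto intro: open_INT)
    ultimately show ?thesis by auto
  qed
  then show ?thesis by (subst measurable_count_space_eq2) auto
qed simp

lemma le_of_min_le_approx:
  fixes A S \<pi> \<epsilon>\<^sub>0 :: real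
  assumes "\<And>\<epsilon>. 0 < \<epsilon> \<Longrightarrow> \<epsilon> < \<epsilon>\<^sub>0 \<Longrightarrow> min A (S - \<epsilon>/2) \<le> \<pi>" "0 < \<epsilon>\<^sub>0" "A \<le> S"
  shows "A \<le> \<pi>"
proof (rule ccontr)
  assume "\<not> A \<le> \<pi>"
  define \<epsilon> where "\<epsilon> = min (\<epsilon>\<^sub>0/2) (S - \<pi>)"
  have "0 < \<epsilon>" "\<epsilon> < \<epsilon>\<^sub>0" using \<open>\<not> A \<le> \<pi>\<close> assms(2,3) by (auto simp: \<epsilon>_def)
  then have "min A (S - \<epsilon>/2) \<le> \<pi>" by (rule assms(1))
  moreover have "\<epsilon> \<le> S - \<pi>" by (simp add: \<epsilon>_def)
  then have "\<pi> < S - \<epsilon>/2" using \<open>\<not> A \<le> \<pi>\<close> assms(3) \<open>0 < \<epsilon>\<close> by linarith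
  ultimately show False using \<open>\<not> A \<le> \<pi>\<close> by linarith
qed

lemma sum_eq_bound_if_le_bound:
  fixes a :: "'a \<Rightarrow> real"
  assumes "finite D" "\<And>d. d \<in> D \<Longrightarrow> a d \<le> \<pi>" "real (card D) * \<pi> \<le> (\<Sum>d\<in>D. a d)" "d \<in> D"
  shows "a d = \<pi>"
proof -
  have "(\<Sum>d\<in>D. \<pi> - a d) \<le> 0" using assms(3) by (simp add: sum_subtractf)
  then have "\<forall>d\<in>D. \<pi> - a d = 0" using sum_nonneg_eq_0_iff[OF assms(1)] assms(2)
    by (metis (no_types, lifting) antisym diff_ge_0_iff_ge sum_nonneg)
  then show ?thesis using assms(4) by simp
qed

locale metric_network =
  fixes V :: "'v set" and E :: "'e set" and ends :: "'e \<Rightarrow> 'v \<times> 'v" and len :: "'e \<Rightarrow> real"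
  assumes network: "network V E ends len"
begin

abbreviation "nwalk \<equiv> walk V E ends len"
abbreviation "dist_V \<equiv> dV V E ends len"
abbreviation "dist_S \<equiv> pdist V E ends len"

definition incident :: "'e \<Rightarrow> 'v \<Rightarrow> bool" where
  "incident e v \<longleftrightarrow> v = fst (ends e) \<or> v = snd (ends e)"

section \<open>Walks and the distance between vertices\<close>

lemma finite_E: "finite E"
  using network by (simp add: network_def)

lemma edge_wf:
  assumes "e \<in> E"
  shows "fst (ends e) \<in> V" "snd (ends e) \<in> V" "fst (ends e) \<noteq> snd (ends e)" "len e > 0"
  using network assms by (auto simp: network_def)

lemma edge_len_lower_bound: "\<exists>\<eta>>0. \<forall>e\<in>E. \<eta> \<le> len e"
proof (cases "E = {}")
  case False
  then show ?thesis
    using finite_E edge_wf(4) by (intro exI[of _ "Min (len ` E)"]) (auto simp: Min_gr_iff)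
qed (auto intro: exI[of _ 1])

lemma walk_length_nonneg: "nwalk a l b \<Longrightarrow> 0 \<le> l"
  by (induction rule: walk.induct) (auto dest: edge_wf)

lemma walk_append: "nwalk a l1 b \<Longrightarrow> nwalk b l2 c \<Longrightarrow> nwalk a (l1 + l2) c"
proof (induction rule: walk.induct)
  case (wcons e a b l c')
  then have "nwalk a (len e + (l + l2)) c" by (intro walk.wcons) auto
  then show ?case by (simp add: add.assoc)
qed simp

lemma walk_edge:
  assumes "e \<in> E" "ends e = (a, b) \<or> ends e = (b, a)"
  shows "nwalk a (len e) b"
proof -
  have "nwalk b 0 b" using edge_wf[OF assms(1)] assms(2) by (auto intro: walk.wnil)
  from walk.wcons[OF assms this] show ?thesis by simp
qed

lemma walk_reverse: "nwalk a l b \<Longrightarrow> nwalk b l a"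
proof (induction rule: walk.induct)
  case (wnil v) then show ?case by (rule walk.wnil)
next
  case (wcons e a b l c)
  have "nwalk b (len e) a" using walk_edge[OF wcons(1)] wcons(2) by auto
  from walk_append[OF wcons(4) this] show ?case by (simp add: add.commute)
qed

lemma walk_first_edge:
  assumes "nwalk a l b" "a \<noteq> b"
  obtains e c l' where "e \<in> E" "ends e = (a, c) \<or> ends e = (c, a)" "nwalk c l' b" "l = len e + l'"
  using assms by (cases rule: walk.cases) auto

lemma dist_V_le_walk: "nwalk u l v \<Longrightarrow> dist_V u v \<le> l"
  unfolding dV_def by (rule cInf_lower) (auto intro: bdd_belowI[of _ 0] dest: walk_length_nonneg)

lemma dist_V_greatest:
  assumes "u \<in> V" "v \<in> V" "\<And>l. nwalk u l v \<Longrightarrow> c \<le> l"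
  shows "c \<le> dist_V u v"
  unfolding dV_def using network assms by (intro cInf_greatest) (auto simp: network_def)

lemma dist_V_nonneg: "u \<in> V \<Longrightarrow> v \<in> V \<Longrightarrow> 0 \<le> dist_V u v"
  by (rule dist_V_greatest) (auto dest: walk_length_nonneg)

lemma dist_V_self: "u \<in> V \<Longrightarrow> dist_V u u = 0"
  using dist_V_le_walk[OF walk.wnil] dist_V_nonneg by force

lemma dist_V_sym: "u \<in> V \<Longrightarrow> v \<in> V \<Longrightarrow> dist_V u v = dist_V v u"
  by (rule antisym; rule dist_V_greatest) (auto intro: dist_V_le_walk walk_reverse)

lemma dist_V_approx:
  assumes "u \<in> V" "v \<in> V" "0 < \<eta>"
  obtains l where "nwalk u l v" "l < dist_V u v + \<eta>"
proof -
  have ne: "{l. nwalk u l v} \<noteq> {}" using network assms(1,2) by (auto simp: network_def)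
  have "Inf {l. nwalk u l v} < dist_V u v + \<eta>" using assms(3) by (simp add: dV_def)
  from cInf_lessD[OF ne this] show ?thesis using that by blast
qed

lemma dist_V_le_len: "e \<in> E \<Longrightarrow> ends e = (a, b) \<or> ends e = (b, a) \<Longrightarrow> dist_V a b \<le> len e"
  by (rule dist_V_le_walk, rule walk_edge)

lemma dist_V_pos:
  assumes "u \<in> V" "v \<in> V" "u \<noteq> v"
  shows "0 < dist_V u v"
proof -
  obtain \<eta> where \<eta>: "0 < \<eta>" "\<forall>e\<in>E. \<eta> \<le> len e" using edge_len_lower_bound by blast
  have "\<eta> \<le> dist_V u v"
  proof (rule dist_V_greatest[OF assms(1,2)])
    fix l assume "nwalk u l v"
    then obtain e c l' where "e \<in> E" "nwalk c l' v" "l = len e + l'"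
      using assms(3) by (rule walk_first_edge)
    then show "\<eta> \<le> l" using \<eta> walk_length_nonneg by fastforce
  qed
  then show ?thesis using \<eta> by simp
qed

lemma vdeg_pos:
  assumes "e \<in> E" "incident e v"
  shows "1 \<le> vdeg E ends v"
proof -
  have "e \<in> {e\<in>E. v = fst (ends e) \<or> v = snd (ends e)}" using assms by (auto simp: incident_def)
  then have "{e\<in>E. v = fst (ends e) \<or> v = snd (ends e)} \<noteq> {}" by blast
  then show ?thesis using finite_E by (simp add: vdeg_def Suc_le_eq card_gt_0_iff)
qed

lemma leaf_edge_unique:
  assumes "vdeg E ends z = 1" "e \<in> E" "incident e z" "e' \<in> E" "incident e' z"
  shows "e' = e"
proof -
  obtain e0 where e0: "{e\<in>E. z = fst (ends e) \<or> z = snd (ends e)} = {e0}"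
    using assms(1) by (auto simp: vdeg_def card_Suc_eq)
  have "e \<in> {e\<in>E. z = fst (ends e) \<or> z = snd (ends e)}" "e' \<in> {e\<in>E. z = fst (ends e) \<or> z = snd (ends e)}"
    using assms(2-5) by (auto simp: incident_def)
  then show ?thesis unfolding e0 by simp
qed

lemma walk_from_leaf:
  assumes "vdeg E ends z = 1" "e \<in> E" "ends e = (z, z') \<or> ends e = (z', z)" "nwalk z l u" "u \<noteq> z"
  obtains l' where "nwalk z' l' u" "l = len e + l'"
proof -
  obtain e1 c l' where e1: "e1 \<in> E" "ends e1 = (z, c) \<or> ends e1 = (c, z)" "nwalk c l' u" "l = len e1 + l'"
    using walk_first_edge[OF assms(4)] assms(5) by blast
  have "e1 = e" using leaf_edge_unique[OF assms(1,2) _ e1(1)] assms(3) e1(2) by (auto simp: incident_def)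
  moreover have "c = z'" using e1(2) assms(3) edge_wf(3)[OF assms(2)] \<open>e1 = e\<close> by auto
  ultimately show ?thesis using e1 that by auto
qed

lemma dist_V_from_leaf:
  assumes "vdeg E ends z = 1" "e \<in> E" "ends e = (z, z') \<or> ends e = (z', z)" "u \<in> V" "u \<noteq> z"
  shows "len e + dist_V z' u \<le> dist_V z u"
proof (rule dist_V_greatest)
  show "z \<in> V" using edge_wf[OF assms(2)] assms(3) by auto
  fix l assume "nwalk z l u"
  then obtain l' where "nwalk z' l' u" "l = len e + l'" using walk_from_leaf[OF assms(1-3) _ assms(5)] by blast
  then show "len e + dist_V z' u \<le> l" using dist_V_le_walk by auto
qed fact

section \<open>Distances in the metric network\<close>

definition dist_VS :: "'v \<Rightarrow> ('v,'e) point \<Rightarrow> real" where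
  "dist_VS u q = (case q of Vx v \<Rightarrow> dist_V u v
      | Ip e s \<Rightarrow> min (dist_V u (fst (ends e)) + s) (dist_V u (snd (ends e)) + (len e - s)))"

lemma anchor_sums_image:
  "{a + f u v + b | u a v b. (u, a) \<in> A \<and> (v, b) \<in> B}
     = (\<lambda>(p1, p2). snd p1 + f (fst p1) (fst p2) + snd p2) ` (A \<times> B)"
  by (auto simp: image_iff) force+

lemma dist_S_Vx: "dist_S (Vx v) q = dist_VS v q"
  unfolding pdist_def anchor_sums_image by (cases q) (simp_all add: dist_VS_def)

lemma dist_S_Ip_Vx:
  "dist_S (Ip e t) (Vx v) = min (t + dist_VS (fst (ends e)) (Vx v)) (len e - t + dist_VS (snd (ends e)) (Vx v))"
  unfolding pdist_def anchor_sums_image by (simp add: dist_VS_def Times_insert_left)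

lemma dist_S_Ip_Ip:
  "dist_S (Ip e t) (Ip e' s) =
     (let X = min (t + dist_VS (fst (ends e)) (Ip e' s)) (len e - t + dist_VS (snd (ends e)) (Ip e' s))
      in if e' = e then min X \<bar>t - s\<bar> else X)"
  unfolding pdist_def anchor_sums_image
  by (simp add: dist_VS_def Times_insert_left Let_def min_add_distrib_right min.assoc algebra_simps)

lemma dist_S_Ip:
  "dist_S (Ip e t) q =
     (let X = min (t + dist_VS (fst (ends e)) q) (len e - t + dist_VS (snd (ends e)) q)
      in case q of Ip e' s \<Rightarrow> if e' = e then min X \<bar>t - s\<bar> else X | Vx _ \<Rightarrow> X)"
  by (cases q) (simp_all add: dist_S_Ip_Vx dist_S_Ip_Ip Let_def)

lemma dist_VS_nonneg: "u \<in> V \<Longrightarrow> valid_pt V E len q \<Longrightarrow> 0 \<le> dist_VS u q"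
  by (cases q) (auto simp: dist_VS_def intro!: dist_V_nonneg add_nonneg_nonneg dest: edge_wf)

lemma continuous_on_dist_S_edge: "continuous_on UNIV (\<lambda>t. dist_S (Ip e t) q)"
proof (cases q)
  case (Vx v)
  then show ?thesis by (simp add: dist_S_Ip Let_def) (intro continuous_intros)
next
  case (Ip e' s)
  then show ?thesis by (cases "e' = e") (simp_all add: dist_S_Ip Let_def, (intro continuous_intros)+)
qed

section \<open>Directions at a location\<close>

text \<open>A direction (e, b) at w is the part of edge e from w towards its endpoint farv ends e b.
  Along it, seg_coord is the signed distance from w (positive towards farv ends e b), seg_pt its
  inverse, seg_len the length of the part and back_len the length of the rest of e behind w.\<close>

definition "seg_len w e b = \<bar>farc len e b - coord ends len w e\<bar>"
definition "back_len w e b = \<bar>farc len e (\<not> b) - coord ends len w e\<bar>"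
definition "seg_pt w e b s = (if b then coord ends len w e + s else coord ends len w e - s)"
definition "seg_coord w e b u = (if b then u - coord ends len w e else coord ends len w e - u)"
definition "seg_dist w e b q = (case q of Vx _ \<Rightarrow> seg_len w e b | Ip _ u \<Rightarrow> seg_coord w e b u)"

lemma dirs_iff: "(e, b) \<in> dirs E ends w \<longleftrightarrow>
   (\<exists>v. w = Vx v \<and> e \<in> E \<and> incident e v \<and> b = (v = fst (ends e))) \<or> (\<exists>t. w = Ip e t)"
  by (cases w) (auto simp: dirs_def incident_def)

lemma dirs_VxI:
  assumes "e \<in> E" "ends e = (v, c) \<or> ends e = (c, v)"
  shows "(e, v = fst (ends e)) \<in> dirs E ends (Vx v)" "farv ends e (v = fst (ends e)) = c"
  using assms edge_wf(3)[OF assms(1)] by (cases "ends e"; auto simp: dirs_def farv_def)+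

lemma dirs_Vx_image:
  "dirs E ends (Vx v) = (\<lambda>e. (e, v = fst (ends e))) ` {e\<in>E. v = fst (ends e) \<or> v = snd (ends e)}"
  by (auto simp: dirs_def)

lemma finite_dirs: "finite (dirs E ends w)"
  by (cases w) (simp_all add: dirs_Vx_image finite_E, simp add: dirs_def)

lemma card_dirs: "card (dirs E ends w) = pdeg E ends w"
proof (cases w)
  case (Vx v)
  have "inj_on (\<lambda>e. (e, v = fst (ends e))) X" for X by (auto simp: inj_on_def)
  then show ?thesis using Vx by (simp add: dirs_Vx_image card_image vdeg_def)
qed (simp add: dirs_def)

lemma saturated_dirs_nonempty:
  assumes "saturated V E ends len n x w" "i < n" "x i = w"
  shows "dirs E ends w \<noteq> {}"
proof -
  have "0 < card {j. j < n \<and> x j = w}" using assms(2,3) by (auto simp: card_gt_0_iff)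
  then show ?thesis using assms(1) card_dirs[of w] by (auto simp: saturated_def)
qed

lemma ends_farv: "ends e = (farv ends e b, farv ends e (\<not> b)) \<or> ends e = (farv ends e (\<not> b), farv ends e b)"
  by (cases b) (auto simp: farv_def)

lemma seg_pt_coord: "seg_pt w e b (seg_coord w e b u) = u" "seg_coord w e b (seg_pt w e b s) = s"
  by (auto simp: seg_pt_def seg_coord_def)

context
  fixes w e b
  assumes vw: "valid_pt V E len w" and dw: "(e, b) \<in> dirs E ends w"
begin

lemma dir_edge: "e \<in> E"
  using dw vw by (auto simp: dirs_iff)

lemma dir_coord_range: "0 \<le> coord ends len w e" "coord ends len w e \<le> len e"
  using dw vw edge_wf(4)[OF dir_edge] by (auto simp: dirs_iff coord_def)

lemma dir_props:
  "0 < seg_len w e b" "0 \<le> back_len w e b" "seg_len w e b + back_len w e b = len e"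
  "farv ends e b \<noteq> farv ends e (\<not> b)" "farv ends e b \<in> V" "farv ends e (\<not> b) \<in> V"
  "incident e (farv ends e b)" "incident e (farv ends e (\<not> b))"
  using dw vw edge_wf[OF dir_edge] dir_coord_range
  by (auto simp: dirs_iff coord_def seg_len_def back_len_def farc_def farv_def incident_def)

lemma dir_Vx: "w = Vx v \<Longrightarrow> v = farv ends e (\<not> b) \<and> back_len w e b = 0"
  using dw vw edge_wf[OF dir_edge]
  by (auto simp: dirs_iff coord_def back_len_def farc_def farv_def incident_def)

lemma dir_Ip: "w = Ip e' t \<Longrightarrow> e' = e \<and> back_len w e b > 0 \<and> coord ends len w e = t"
  using dw vw edge_wf[OF dir_edge] by (auto simp: dirs_iff coord_def back_len_def farc_def)

lemma valid_seg_pt: "0 < s \<Longrightarrow> s < seg_len w e b \<Longrightarrow> valid_pt V E len (Ip e (seg_pt w e b s))"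
  using dir_coord_range dir_edge by (auto simp: seg_pt_def seg_len_def farc_def)

lemma seg_coord_gt: "valid_pt V E len (Ip e u) \<Longrightarrow> - back_len w e b < seg_coord w e b u"
  using dir_coord_range by (cases b) (auto simp: seg_coord_def back_len_def farc_def)

lemma seg_coord_less: "valid_pt V E len (Ip e u) \<Longrightarrow> seg_coord w e b u < seg_len w e b"
  using dir_coord_range by (cases b) (auto simp: seg_coord_def seg_len_def farc_def)

lemma on_seg_iff:
  "valid_pt V E len q \<Longrightarrow>
     on_seg ends len w e b q \<longleftrightarrow> q = Vx (farv ends e b) \<or> (\<exists>u. q = Ip e u \<and> 0 < seg_coord w e b u)"
  using dir_coord_range by (cases b; cases q) (auto simp: on_seg_def seg_coord_def)

lemma not_on_seg_self: "\<not> on_seg ends len w e b w"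
  using dir_Vx dir_Ip dir_props(4) by (cases w) (auto simp: on_seg_def)

lemma seg_coord_nonpos:
  "valid_pt V E len (Ip e u) \<Longrightarrow> \<not> on_seg ends len w e b (Ip e u) \<Longrightarrow> seg_coord w e b u \<le> 0"
  using on_seg_iff[of "Ip e u"] by auto

lemma seg_dist_range:
  "valid_pt V E len q \<Longrightarrow> on_seg ends len w e b q \<Longrightarrow> 0 < seg_dist w e b q \<and> seg_dist w e b q \<le> seg_len w e b"
  using dir_coord_range dir_props(1)
  by (cases b; cases q) (auto simp: on_seg_def seg_coord_def seg_dist_def seg_len_def farc_def)

lemma dist_S_seg_pt:
  "dist_S (Ip e (seg_pt w e b s)) q =
     (let X = min (back_len w e b + s + dist_VS (farv ends e (\<not> b)) q) (seg_len w e b - s + dist_VS (farv ends e b) q)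
      in case q of Ip e' u \<Rightarrow> if e' = e then min X \<bar>s - seg_coord w e b u\<bar> else X | Vx _ \<Rightarrow> X)"
  using dir_coord_range
  by (cases b; cases q)
    (simp_all add: dist_S_Ip seg_pt_def seg_len_def back_len_def farc_def farv_def seg_coord_def
      algebra_simps min.commute Let_def abs_minus_commute)

lemma dist_S_seg_pt_ge:
  assumes "m \<le> back_len w e b + s + dist_VS (farv ends e (\<not> b)) q"
    "m \<le> seg_len w e b - s + dist_VS (farv ends e b) q"
    "\<And>u. q = Ip e u \<Longrightarrow> m \<le> \<bar>s - seg_coord w e b u\<bar>"
  shows "m \<le> dist_S (Ip e (seg_pt w e b s)) q"
  using assms by (cases q) (auto simp: dist_S_seg_pt Let_def)

lemma dist_S_seg_pt_le_far: "dist_S (Ip e (seg_pt w e b s)) q \<le> seg_len w e b - s + dist_VS (farv ends e b) q"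
  by (cases q) (auto simp: dist_S_seg_pt Let_def)

lemma dist_S_seg_pt_le_along: "dist_S (Ip e (seg_pt w e b s)) (Ip e u) \<le> \<bar>s - seg_coord w e b u\<bar>"
  by (auto simp: dist_S_seg_pt Let_def)

lemma dist_VS_same_edge:
  "dist_VS y (Ip e u) = min (dist_V y (farv ends e (\<not> b)) + (back_len w e b + seg_coord w e b u))
     (dist_V y (farv ends e b) + (seg_len w e b - seg_coord w e b u))"
  using dir_coord_range
  by (cases b) (auto simp: dist_VS_def seg_len_def back_len_def farc_def farv_def seg_coord_def
      algebra_simps min.commute)

lemma dist_VS_origin_ge:
  "min (dist_V y (farv ends e (\<not> b)) + back_len w e b) (dist_V y (farv ends e b) + seg_len w e b) \<le> dist_VS y w"
proof (cases w)
  case (Vx v)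
  then show ?thesis using dir_Vx[OF Vx] by (simp add: dist_VS_def)
next
  case (Ip e' t)
  then have "e' = e" "coord ends len w e = t" using dir_Ip by auto
  then show ?thesis using Ip dist_VS_same_edge[of y t] by (simp add: seg_coord_def)
qed

lemma dist_S_le_seg_dist:
  assumes "valid_pt V E len q" "on_seg ends len w e b q"
  shows "dist_S w q \<le> seg_dist w e b q"
proof (cases w)
  case (Vx v)
  have v: "v = farv ends e (\<not> b)" "back_len w e b = 0" using dir_Vx[OF Vx] by auto
  then have "seg_len w e b = len e" using dir_props(3) by simp
  moreover have "dist_V v (farv ends e b) \<le> len e" using dist_V_le_len[OF dir_edge] ends_farv v by auto
  moreover have "dist_VS v (Ip e u) \<le> dist_V v v + (back_len w e b + seg_coord w e b u)" for u
    using dist_VS_same_edge[of v u] v by simp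
  ultimately show ?thesis using assms Vx v dist_V_self dir_props(6) on_seg_iff
    by (auto simp: dist_S_Vx dist_VS_def seg_dist_def)
next
  case (Ip e' t)
  then have w: "w = Ip e (seg_pt w e b 0)" using dir_Ip[OF Ip] by (simp add: seg_pt_def)
  have "dist_S w (Vx (farv ends e b)) \<le> seg_len w e b"
    using dist_S_seg_pt_le_far[of 0 "Vx (farv ends e b)"] w dist_V_self dir_props(5) by (simp add: dist_VS_def)
  moreover have "dist_S w (Ip e u) \<le> seg_coord w e b u" if "0 < seg_coord w e b u" for u
    using dist_S_seg_pt_le_along[of 0 u] w that by simp
  ultimately show ?thesis using assms on_seg_iff by (auto simp: seg_dist_def)
qed

end
section \<open>Leaves and the vertex property\<close>

context
  fixes w e b
  assumes vw: "valid_pt V E len w" and dw: "(e, b) \<in> dirs E ends w"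
begin

lemma len_le_dist_V_from_leaf:
  assumes "vdeg E ends (farv ends e b) = 1" "v \<in> V" "v \<noteq> farv ends e b"
  shows "len e \<le> dist_V (farv ends e b) v"
proof -
  have "len e + dist_V (farv ends e (\<not> b)) v \<le> dist_V (farv ends e b) v"
    using dist_V_from_leaf[OF assms(1) dir_edge[OF vw dw] ends_farv assms(2,3)] .
  moreover have "0 \<le> dist_V (farv ends e (\<not> b)) v" using dist_V_nonneg dir_props(6)[OF vw dw] assms(2) by auto
  ultimately show ?thesis by simp
qed

lemma seg_len_le_dist_VS_from_leaf:
  assumes "vdeg E ends (farv ends e b) = 1" "valid_pt V E len q" "\<not> on_seg ends len w e b q"
  shows "seg_len w e b \<le> dist_VS (farv ends e b) q"
proof (cases q)
  case (Vx v)
  then have "v \<noteq> farv ends e b" "v \<in> V" using assms(2,3) by (auto simp: on_seg_def)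
  then have "len e \<le> dist_V (farv ends e b) v" using len_le_dist_V_from_leaf[OF assms(1)] by auto
  then show ?thesis using dir_props[OF vw dw] Vx by (simp add: dist_VS_def)
next
  case (Ip e' u)
  show ?thesis
  proof (cases "e' = e")
    case True
    then have "seg_coord w e b u \<le> 0" using seg_coord_nonpos[OF vw dw] assms Ip by auto
    moreover have "len e \<le> dist_V (farv ends e b) (farv ends e (\<not> b))"
      using len_le_dist_V_from_leaf[OF assms(1)] dir_props[OF vw dw] by auto
    moreover have "- back_len w e b < seg_coord w e b u" using seg_coord_gt[OF vw dw] assms(2) Ip True by auto
    moreover have "0 \<le> dist_V (farv ends e b) (farv ends e b)" using dist_V_nonneg dir_props[OF vw dw] by auto
    ultimately show ?thesis
      using dist_VS_same_edge[OF vw dw, of "farv ends e b" u] Ip True dir_props[OF vw dw] by simp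
  next
    case False
    have e': "e' \<in> E" using assms(2) Ip by auto
    have "fst (ends e') \<noteq> farv ends e b" "snd (ends e') \<noteq> farv ends e b"
      using leaf_edge_unique[OF assms(1) dir_edge[OF vw dw] dir_props(7)[OF vw dw] e'] False
      by (auto simp: incident_def)
    then have "len e \<le> dist_V (farv ends e b) (fst (ends e'))" "len e \<le> dist_V (farv ends e b) (snd (ends e'))"
      using len_le_dist_V_from_leaf[OF assms(1)] edge_wf[OF e'] by auto
    then show ?thesis using Ip assms(2) dir_props[OF vw dw] by (simp add: dist_VS_def)
  qed
qed

end

text \<open>This is where the absence of vertices of degree 2 enters.\<close>
lemma leaf_or_occupied:
  assumes "vertex_property V E ends n x" "e \<in> E" "incident e v"
  shows "vdeg E ends v = 1 \<or> (\<exists>j<n. x j = Vx v)"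
proof -
  have v: "v \<in> V" using assms(2,3) edge_wf by (auto simp: incident_def)
  then have "vdeg E ends v \<noteq> 2" using network by (simp add: network_def)
  moreover have "1 \<le> vdeg E ends v" using vdeg_pos[OF assms(2,3)] .
  ultimately show ?thesis using assms(1) v unfolding vertex_property_def by force
qed

lemma far_leaf_or_occupied:
  assumes "vertex_property V E ends n x" "valid_pt V E len w" "(e, b) \<in> dirs E ends w"
  shows "vdeg E ends (farv ends e b) = 1 \<or> (\<exists>j<n. x j = Vx (farv ends e b))"
  using leaf_or_occupied[OF assms(1) dir_edge[OF assms(2,3)] dir_props(7)[OF assms(2,3)]] .

section \<open>The reach of a location along a direction\<close>

text \<open>The analogue of delta for the players in J, with distances measured along the direction instead of
  in S; we call it the reach of w in direction (e, b).\<close>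
definition delta_along :: "(nat \<Rightarrow> ('v,'e) point) \<Rightarrow> nat set \<Rightarrow> ('v,'e) point \<Rightarrow> 'e \<Rightarrow> bool \<Rightarrow> real" where
  "delta_along x J w e b = (let P = {j \<in> J. on_seg ends len w e b (x j)} in
      if vdeg E ends (farv ends e b) = 1 \<and> P = {} then seg_len w e b
      else Min {seg_dist w e b (x j) | j. j \<in> P} / 2)"

definition guarded :: "(nat \<Rightarrow> ('v,'e) point) \<Rightarrow> nat set \<Rightarrow> ('v,'e) point \<Rightarrow> 'e \<Rightarrow> bool \<Rightarrow> bool" where
  "guarded x J w e b \<longleftrightarrow> vdeg E ends (farv ends e b) = 1 \<or> {j \<in> J. on_seg ends len w e b (x j)} \<noteq> {}"

lemma guardedI_occupied: "j \<in> J \<Longrightarrow> x j = Vx (farv ends e b) \<Longrightarrow> guarded x J w e b"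
  by (auto simp: guarded_def on_seg_def)

lemma guarded_if_vertex_property:
  assumes "vertex_property V E ends n x" "valid_pt V E len w" "(e, b) \<in> dirs E ends w"
  shows "guarded x {..<n} w e b"
  using far_leaf_or_occupied[OF assms] by (auto simp: guarded_def on_seg_def)

lemma delta_along_cong:
  "{j \<in> J. on_seg ends len w e b (x j)} = {j \<in> J'. on_seg ends len w e b (x j)} \<Longrightarrow>
     delta_along x J w e b = delta_along x J' w e b"
  by (simp add: delta_along_def)

context
  fixes w e b and x :: "nat \<Rightarrow> ('v,'e) point" and J :: "nat set"
  assumes vw: "valid_pt V E len w" and dw: "(e, b) \<in> dirs E ends w"
    and fJ: "finite J" and vx: "\<And>j. j \<in> J \<Longrightarrow> valid_pt V E len (x j)"
    and guarded: "guarded x J w e b"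
begin

lemma delta_along_empty:
  "{j \<in> J. on_seg ends len w e b (x j)} = {} \<Longrightarrow>
     delta_along x J w e b = seg_len w e b \<and> vdeg E ends (farv ends e b) = 1"
  using guarded by (simp add: delta_along_def guarded_def)

lemma delta_along_nonempty:
  assumes "{j \<in> J. on_seg ends len w e b (x j)} \<noteq> {}"
  shows "2 * delta_along x J w e b \<le> seg_len w e b" "0 < delta_along x J w e b"
    "\<And>j. j \<in> J \<Longrightarrow> on_seg ends len w e b (x j) \<Longrightarrow> 2 * delta_along x J w e b \<le> seg_dist w e b (x j)"
    "\<exists>j\<in>J. on_seg ends len w e b (x j) \<and> seg_dist w e b (x j) = 2 * delta_along x J w e b"
proof -
  let ?S = "{seg_dist w e b (x j) | j. j \<in> {j \<in> J. on_seg ends len w e b (x j)}}"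
  have fS: "finite ?S" using fJ by simp
  have nS: "?S \<noteq> {}" using assms by auto
  have A: "2 * delta_along x J w e b = Min ?S"
    using assms unfolding delta_along_def Let_def by (simp only: if_not_P) simp
  obtain j0 where j0: "j0 \<in> J" "on_seg ends len w e b (x j0)" "Min ?S = seg_dist w e b (x j0)"
    using Min_in[OF fS nS] by auto
  then show "\<exists>j\<in>J. on_seg ends len w e b (x j) \<and> seg_dist w e b (x j) = 2 * delta_along x J w e b"
    using A by auto
  show "2 * delta_along x J w e b \<le> seg_dist w e b (x j)" if "j \<in> J" "on_seg ends len w e b (x j)" for j
    using A Min_le[OF fS] that by auto
  show "2 * delta_along x J w e b \<le> seg_len w e b" "0 < delta_along x J w e b"
    using seg_dist_range[OF vw dw vx[OF j0(1)] j0(2)] A j0 by auto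
qed

lemma delta_along_pos: "0 < delta_along x J w e b"
  and delta_along_le_seg_len: "delta_along x J w e b \<le> seg_len w e b"
  using delta_along_empty delta_along_nonempty dir_props(1)[OF vw dw]
  by (cases "{j \<in> J. on_seg ends len w e b (x j)} = {}"; force)+

lemma dist_S_seg_pt_to_players_ge:
  assumes "j \<in> J"
  shows "min s (2 * delta_along x J w e b - s) \<le> dist_S (Ip e (seg_pt w e b s)) (x j)"
proof (rule dist_S_seg_pt_ge[OF vw dw])
  let ?A = "delta_along x J w e b"
  have vq: "valid_pt V E len (x j)" using vx assms by auto
  have "0 \<le> dist_VS (farv ends e (\<not> b)) (x j)" using dist_VS_nonneg dir_props(6)[OF vw dw] vq by auto
  then show "min s (2 * ?A - s) \<le> back_len w e b + s + dist_VS (farv ends e (\<not> b)) (x j)"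
    using dir_props(2)[OF vw dw] by linarith
  show "min s (2 * ?A - s) \<le> seg_len w e b - s + dist_VS (farv ends e b) (x j)"
  proof (cases "{j \<in> J. on_seg ends len w e b (x j)} = {}")
    case True
    then have "seg_len w e b \<le> dist_VS (farv ends e b) (x j)"
      using seg_len_le_dist_VS_from_leaf[OF vw dw _ vq] delta_along_empty[OF True] assms by auto
    then show ?thesis using delta_along_empty[OF True] by linarith
  next
    case False
    have "0 \<le> dist_VS (farv ends e b) (x j)" using dist_VS_nonneg dir_props(5)[OF vw dw] vq by auto
    then show ?thesis using delta_along_nonempty(1)[OF False] by linarith
  qed
  fix u assume xu: "x j = Ip e u"
  show "min s (2 * ?A - s) \<le> \<bar>s - seg_coord w e b u\<bar>"
  proof (cases "on_seg ends len w e b (x j)")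
    case True
    then have "2 * ?A \<le> seg_dist w e b (x j)" using delta_along_nonempty(3) assms by blast
    then show ?thesis using xu by (simp add: seg_dist_def)
  next
    case False
    then have "seg_coord w e b u \<le> 0" using seg_coord_nonpos[OF vw dw] vq xu by auto
    then show ?thesis by linarith
  qed
qed

end
context
  fixes w e b and x :: "nat \<Rightarrow> ('v,'e) point" and J :: "nat set"
  assumes vw: "valid_pt V E len w" and dw: "(e, b) \<in> dirs E ends w"
    and fJ: "finite J" and vx: "\<And>j. j \<in> J \<Longrightarrow> valid_pt V E len (x j)"
    and guarded: "guarded x J w e b"
begin

lemma dist_S_seg_pt_to_nearest_player:
  assumes "{j \<in> J. on_seg ends len w e b (x j)} \<noteq> {}"
  obtains j where "j \<in> J" "dist_S (Ip e (seg_pt w e b s)) (x j) \<le> \<bar>s - 2 * delta_along x J w e b\<bar>"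
proof -
  let ?A = "delta_along x J w e b"
  obtain j where j: "j \<in> J" "on_seg ends len w e b (x j)" "seg_dist w e b (x j) = 2 * ?A"
    using delta_along_nonempty(4)[OF vw dw fJ vx guarded assms] by blast
  then consider "x j = Vx (farv ends e b)" | u where "x j = Ip e u"
    using on_seg_iff[OF vw dw vx[OF j(1)]] by auto
  then have "dist_S (Ip e (seg_pt w e b s)) (x j) \<le> \<bar>s - 2 * ?A\<bar>"
  proof cases
    case 1
    then have "2 * ?A = seg_len w e b" using j(3) by (simp add: seg_dist_def)
    moreover have "dist_VS (farv ends e b) (x j) = 0" using 1 dist_V_self dir_props(5)[OF vw dw] by (simp add: dist_VS_def)
    ultimately show ?thesis using dist_S_seg_pt_le_far[OF vw dw, of s "x j"] by simp
  next
    case (2 u)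
    then show ?thesis using j(3) dist_S_seg_pt_le_along[OF vw dw, of s u] by (simp add: seg_dist_def)
  qed
  with j(1) that show ?thesis by blast
qed

end

context
  fixes w e b
  assumes vw: "valid_pt V E len w" and dw: "(e, b) \<in> dirs E ends w"
begin

text \<open>A consumer at distance s from w along (e, b) can only reach w the short way or around e.\<close>
lemma dist_S_seg_pt_to_origin_ge:
  assumes "0 < s"
  shows "min s (seg_len w e b - s + min (dist_V (farv ends e b) (farv ends e (\<not> b)) + back_len w e b) (seg_len w e b))
           \<le> dist_S (Ip e (seg_pt w e b s)) w"
    (is "min s ?R \<le> _")
proof (rule dist_S_seg_pt_ge[OF vw dw])
  have "0 \<le> dist_VS (farv ends e (\<not> b)) w" using dist_VS_nonneg dir_props(6)[OF vw dw] vw by auto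
  then show "min s ?R \<le> back_len w e b + s + dist_VS (farv ends e (\<not> b)) w"
    using dir_props(2)[OF vw dw] by linarith
  show "min s ?R \<le> seg_len w e b - s + dist_VS (farv ends e b) w"
    using dist_VS_origin_ge[OF vw dw, of "farv ends e b"] dist_V_self dir_props(5)[OF vw dw] by auto
  fix u assume "w = Ip e u"
  then have "coord ends len w e = u" using dir_Ip[OF vw dw] by auto
  then show "min s ?R \<le> \<bar>s - seg_coord w e b u\<bar>" using assms by (simp add: seg_coord_def)
qed

lemma dist_VS_le_back_route: "dist_VS u w \<le> dist_V u (farv ends e (\<not> b)) + back_len w e b"
proof (cases w)
  case (Vx v)
  then show ?thesis using dir_Vx[OF vw dw Vx] by (simp add: dist_VS_def)
next
  case (Ip e' t)
  then show ?thesis using dir_Ip[OF vw dw Ip] dir_coord_range[OF vw dw]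
    by (cases b) (auto simp: dist_VS_def back_len_def farc_def farv_def coord_def)
qed

end

lemma guarded_mono: "guarded x J w e b \<Longrightarrow> J \<subseteq> J' \<Longrightarrow> guarded x J' w e b"
  by (auto simp: guarded_def)

lemma delta_along_antimono:
  assumes vw: "valid_pt V E len w" and dw: "(e, b) \<in> dirs E ends w"
    and J': "finite J'" "\<And>j. j \<in> J' \<Longrightarrow> valid_pt V E len (x j)"
    and "J \<subseteq> J'" and guarded: "guarded x J w e b"
  shows "delta_along x J' w e b \<le> delta_along x J w e b"
proof -
  have J: "finite J" "\<And>j. j \<in> J \<Longrightarrow> valid_pt V E len (x j)" using J' \<open>J \<subseteq> J'\<close> finite_subset by auto
  note guarded' = guarded_mono[OF guarded \<open>J \<subseteq> J'\<close>]
  show ?thesis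
  proof (cases "{j \<in> J. on_seg ends len w e b (x j)} = {}")
    case True
    then show ?thesis using delta_along_empty[OF vw dw J guarded] delta_along_le_seg_len[OF vw dw J' guarded'] by simp
  next
    case False
    then obtain j where "j \<in> J" "on_seg ends len w e b (x j)" "seg_dist w e b (x j) = 2 * delta_along x J w e b"
      using delta_along_nonempty(4)[OF vw dw J guarded] by blast
    then show ?thesis using delta_along_nonempty(3)[OF vw dw J' guarded', of j] \<open>J \<subseteq> J'\<close> by (auto simp: not_le)
  qed
qed

section \<open>Consumers served by a location\<close>

text \<open>If s exceeded the reach, the nearest player on the direction would be closer than s, so w would
  have to be reached around e, through the far endpoint; but that endpoint is a leaf (too far) or
  occupied (even closer).\<close>
lemma closest_seg_coord_le_delta_along:
  fixes x :: "nat \<Rightarrow> ('v,'e) point"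
  assumes vp: "vertex_property V E ends n x" and vw: "valid_pt V E len w" and dw: "(e, b) \<in> dirs E ends w"
    and vx: "\<And>j. j < n \<Longrightarrow> valid_pt V E len (x j)"
    and s: "0 < s" "s < seg_len w e b"
    and cl: "\<And>j. j < n \<Longrightarrow> dist_S (Ip e (seg_pt w e b s)) w \<le> dist_S (Ip e (seg_pt w e b s)) (x j)"
  shows "s \<le> delta_along x {..<n} w e b"
proof (rule ccontr)
  let ?A = "delta_along x {..<n} w e b" and ?y = "Ip e (seg_pt w e b s)"
  let ?z = "farv ends e b" and ?z' = "farv ends e (\<not> b)"
  let ?R = "seg_len w e b - s + min (dist_V ?z ?z' + back_len w e b) (seg_len w e b)"
  assume "\<not> s \<le> ?A"
  have vx': "\<And>j. j \<in> {..<n} \<Longrightarrow> valid_pt V E len (x j)" using vx by auto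
  note guarded = guarded_if_vertex_property[OF vp vw dw]
  have "{j \<in> {..<n}. on_seg ends len w e b (x j)} \<noteq> {}"
    using delta_along_empty[OF vw dw finite_lessThan vx' guarded] \<open>\<not> s \<le> ?A\<close> s by force
  then obtain j0 where "j0 < n" "dist_S ?y (x j0) \<le> \<bar>s - 2 * ?A\<bar>"
    using dist_S_seg_pt_to_nearest_player[OF vw dw finite_lessThan vx' guarded] by blast
  moreover have "\<bar>s - 2 * ?A\<bar> < s" using \<open>\<not> s \<le> ?A\<close> delta_along_pos[OF vw dw finite_lessThan vx' guarded] s by linarith
  ultimately have "dist_S ?y w < s" using cl by force
  then have R: "?R < s" "dist_V ?z ?z' + back_len w e b < seg_len w e b"
    using dist_S_seg_pt_to_origin_ge[OF vw dw s(1)] s by auto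
  consider "vdeg E ends ?z = 1" | j1 where "j1 < n" "x j1 = Vx ?z"
    using far_leaf_or_occupied[OF vp vw dw] by blast
  then show False
  proof cases
    case 1
    have "len e \<le> dist_V ?z ?z'" using len_le_dist_V_from_leaf[OF vw dw 1] dir_props[OF vw dw] by auto
    then show False using R dir_props[OF vw dw] by linarith
  next
    case (2 j1)
    have "dist_S ?y (x j1) \<le> seg_len w e b - s"
      using dist_S_seg_pt_le_far[OF vw dw, of s "x j1"] 2 dist_V_self dir_props(5)[OF vw dw]
      by (simp add: dist_VS_def)
    moreover have "0 < dist_V ?z ?z'" using dist_V_pos dir_props[OF vw dw] by auto
    ultimately show False
      using cl[OF 2(1)] dist_S_seg_pt_to_origin_ge[OF vw dw s(1)] R dir_props(2)[OF vw dw] by linarith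
  qed
qed

lemma neighbour_nearer:
  assumes "v \<in> V" "u \<in> V" "u \<noteq> v"
  obtains e c where "e \<in> E" "ends e = (v, c) \<or> ends e = (c, v)" "dist_V c u < dist_V v u"
proof -
  obtain \<eta> where \<eta>: "0 < \<eta>" "\<forall>e\<in>E. \<eta> \<le> len e" using edge_len_lower_bound by blast
  obtain l where l: "nwalk v l u" "l < dist_V v u + \<eta>" using dist_V_approx[OF assms(1,2) \<eta>(1)] .
  obtain e c l' where "e \<in> E" "ends e = (v, c) \<or> ends e = (c, v)" "nwalk c l' u" "l = len e + l'"
    by (rule walk_first_edge[OF l(1) assms(3)[symmetric]])
  moreover have "dist_V c u \<le> l'" using dist_V_le_walk[OF \<open>nwalk c l' u\<close>] .
  ultimately show ?thesis using that l(2) \<eta>(2) by force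
qed

lemma dir_towards_vertex:
  assumes vw: "valid_pt V E len w" and u: "u \<in> V" and "\<And>v. w = Vx v \<Longrightarrow> u \<noteq> v"
  obtains e b where "(e, b) \<in> dirs E ends w" "dist_V u (farv ends e b) < dist_VS u w"
proof (cases w)
  case (Vx v)
  then have v: "v \<in> V" "u \<noteq> v" using assms by auto
  obtain e c where e: "e \<in> E" "ends e = (v, c) \<or> ends e = (c, v)" "dist_V c u < dist_V v u"
    using neighbour_nearer[OF v(1) u v(2)] .
  have "dist_V u c = dist_V c u" "dist_V u v = dist_V v u"
    using dist_V_sym u v(1) edge_wf[OF e(1)] e(2) by auto
  then show ?thesis using that dirs_VxI[OF e(1,2)] e(3) Vx by (auto simp: dist_VS_def)
next
  case (Ip e t)
  then have "(e, False) \<in> dirs E ends w" "(e, True) \<in> dirs E ends w" "0 < t" "t < len e"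
    using vw by (auto simp: dirs_def)
  then show ?thesis using that Ip by (cases "t + dist_V u (fst (ends e)) \<le> len e - t + dist_V u (snd (ends e))")
      (force simp: dist_VS_def farv_def)+
qed

lemma occupied_vertex_nearer:
  fixes x :: "nat \<Rightarrow> ('v,'e) point"
  assumes vp: "vertex_property V E ends n x" and vw: "valid_pt V E len w" and u: "u \<in> V"
    and "\<And>v. w = Vx v \<Longrightarrow> u \<noteq> v"
    and not_leaf: "\<And>e b. (e, b) \<in> dirs E ends w \<Longrightarrow> vdeg E ends (farv ends e b) = 1 \<Longrightarrow> u \<noteq> farv ends e b"
  obtains j z where "j < n" "x j = Vx z" "dist_V u z < dist_VS u w"
proof -
  obtain e b where d: "(e, b) \<in> dirs E ends w" and lt: "dist_V u (farv ends e b) < dist_VS u w"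
    using dir_towards_vertex[OF vw u assms(4)] .
  consider "vdeg E ends (farv ends e b) = 1" | j where "j < n" "x j = Vx (farv ends e b)"
    using far_leaf_or_occupied[OF vp vw d] by blast
  then show ?thesis
  proof cases
    case 1
    have "len e + dist_V (farv ends e (\<not> b)) u \<le> dist_V (farv ends e b) u"
      using dist_V_from_leaf[OF 1 dir_edge[OF vw d] ends_farv u not_leaf[OF d 1]] .
    moreover have "dist_V (farv ends e b) u = dist_V u (farv ends e b)"
      "dist_V (farv ends e (\<not> b)) u = dist_V u (farv ends e (\<not> b))"
      using dist_V_sym u dir_props(5,6)[OF vw d] by auto
    ultimately show ?thesis
      using lt dist_VS_le_back_route[OF vw d, of u] dir_props(1,3)[OF vw d] by linarith
  next
    case 2
    then show ?thesis using that lt by blast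
  qed
qed

lemma dirs_facing:
  assumes vw: "valid_pt V E len w" and d: "(e, b) \<in> dirs E ends w" and vy: "valid_pt V E len (Ip e t)"
  obtains b' where "(e, b') \<in> dirs E ends w" "0 \<le> seg_coord w e b' t"
proof (cases w)
  case (Vx v)
  then show ?thesis using that d seg_coord_gt[OF vw d vy] dir_Vx[OF vw d Vx] by force
next
  case (Ip e0 t0)
  then have "(e, True) \<in> dirs E ends w" "(e, False) \<in> dirs E ends w" "coord ends len w e = t0"
    using d by (auto simp: dirs_def coord_def)
  then show ?thesis using that by (cases "t0 < t") (auto simp: seg_coord_def)
qed

text \<open>A consumer off the edges at x i is reached through an endpoint of its edge, and from there some
  occupied vertex is strictly nearer than x i.\<close>
lemma closest_on_dir_edge:
  fixes x :: "nat \<Rightarrow> ('v,'e) point"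
  assumes vp: "vertex_property V E ends n x" and i: "i < n" and vx: "\<And>j. j < n \<Longrightarrow> valid_pt V E len (x j)"
    and e': "e' \<in> E" "0 < t" "t < len e'"
    and cl: "\<And>j. j < n \<Longrightarrow> dist_S (Ip e' t) (x i) \<le> dist_S (Ip e' t) (x j)"
  shows "\<exists>b. (e', b) \<in> dirs E ends (x i)"
proof (rule ccontr)
  let ?w = "x i"
  assume off: "\<nexists>b. (e', b) \<in> dirs E ends ?w"
  have vw: "valid_pt V E len ?w" using vx i by auto
  have "dist_S (Ip e' t) ?w = min (t + dist_VS (fst (ends e')) ?w) (len e' - t + dist_VS (snd (ends e')) ?w)"
    using off by (cases ?w) (auto simp: dist_S_Ip Let_def dirs_def)
  then obtain u a where ua: "u = fst (ends e') \<and> a = t \<or> u = snd (ends e') \<and> a = len e' - t"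
    "dist_S (Ip e' t) ?w = a + dist_VS u ?w"
    by (auto simp: min_def split: if_splits)
  have u: "u \<in> V" "incident e' u" using ua(1) edge_wf[OF e'(1)] by (auto simp: incident_def)
  have "u \<noteq> v" if "?w = Vx v" for v
    using off that e'(1) u(2) by (auto simp: dirs_def incident_def)
  moreover have "u \<noteq> farv ends e1 b1" if "(e1, b1) \<in> dirs E ends ?w" "vdeg E ends (farv ends e1 b1) = 1" for e1 b1
    using leaf_edge_unique[OF that(2) dir_edge[OF vw that(1)] dir_props(7)[OF vw that(1)] e'(1)] u(2) off that(1)
    by auto
  ultimately obtain j z where j: "j < n" "x j = Vx z" "dist_V u z < dist_VS u ?w"
    using occupied_vertex_nearer[OF vp vw u(1)] by metis
  have "dist_S (Ip e' t) (Vx z) \<le> a + dist_VS u (Vx z)" using ua(1) by (auto simp: dist_S_Ip_Vx)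
  then have "dist_S (Ip e' t) (x j) < dist_S (Ip e' t) ?w" using j ua(2) by (simp add: dist_VS_def)
  then show False using cl[OF j(1)] by linarith
qed

lemma closest_within_delta_along:
  fixes x :: "nat \<Rightarrow> ('v,'e) point"
  assumes vp: "vertex_property V E ends n x" and i: "i < n" and vx: "\<And>j. j < n \<Longrightarrow> valid_pt V E len (x j)"
    and e': "e' \<in> E" "0 < t" "t < len e'"
    and cl: "\<And>j. j < n \<Longrightarrow> dist_S (Ip e' t) (x i) \<le> dist_S (Ip e' t) (x j)"
  obtains b where "(e', b) \<in> dirs E ends (x i)" "0 \<le> seg_coord (x i) e' b t"
    "seg_coord (x i) e' b t \<le> delta_along x {..<n} (x i) e' b"
proof -
  let ?w = "x i"
  have vw: "valid_pt V E len ?w" using vx i by auto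
  have vx': "\<And>j. j \<in> {..<n} \<Longrightarrow> valid_pt V E len (x j)" using vx by auto
  have vy: "valid_pt V E len (Ip e' t)" using e' by simp
  obtain b where b: "(e', b) \<in> dirs E ends ?w" "0 \<le> seg_coord ?w e' b t"
    using closest_on_dir_edge[OF vp i vx e' cl] dirs_facing[OF vw _ vy] by metis
  note guarded = guarded_if_vertex_property[OF vp vw b(1)]
  have "seg_coord ?w e' b t \<le> delta_along x {..<n} ?w e' b"
  proof (cases "seg_coord ?w e' b t = 0")
    case True
    then show ?thesis using delta_along_pos[OF vw b(1) finite_lessThan vx' guarded] by simp
  next
    case False
    then have "0 < seg_coord ?w e' b t" using b(2) by simp
    moreover have "Ip e' (seg_pt ?w e' b (seg_coord ?w e' b t)) = Ip e' t" using seg_pt_coord by simp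
    ultimately show ?thesis
      using closest_seg_coord_le_delta_along[OF vp vw b(1) vx, of "seg_coord ?w e' b t"]
        seg_coord_less[OF vw b(1) vy] cl by auto
  qed
  with b that show ?thesis by blast
qed

section \<open>Payoffs\<close>

lemma closest_le:
  assumes "x i \<in> closest V E ends len n x y" "j < n"
  shows "dist_S y (x i) \<le> dist_S y (x j)"
proof -
  let ?S = "{dist_S y (x j) | j. j < n}"
  obtain j' where "x j' = x i" "dist_S y (x j') = Min ?S"
    using assms(1) by (auto simp: closest_def Let_def)
  moreover have "Min ?S \<le> dist_S y (x j)" using assms(2) by (intro Min_le) auto
  ultimately show ?thesis by simp
qed

lemma share_nonneg: "0 \<le> share V E ends len n x i y"
  by (simp add: share_def)

lemma share_le_if_closest:
  "share V E ends len n x i y \<le>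
     (if x i \<in> closest V E ends len n x y then 1 / real (card {j. j < n \<and> x j = x i}) else 0)"
proof (cases "x i \<in> closest V E ends len n x y")
  case True
  have "finite (closest V E ends len n x y)" by (simp add: closest_def Let_def)
  then have "1 \<le> card (closest V E ends len n x y)" using True by (simp add: Suc_le_eq card_gt_0_iff) blast
  then have "1 / real (card (closest V E ends len n x y)) * (1 / real (card {j. j < n \<and> x j = x i}))
      \<le> 1 / real (card {j. j < n \<and> x j = x i})"
    by (intro mult_left_le_one_le) auto
  then show ?thesis unfolding share_def by (simp only: True if_True)
qed (simp add: share_def)

lemma share_le_1: "share V E ends len n x i y \<le> 1"
  using share_le_if_closest[of n x i y] inverse_nat_le_1 by (simp split: if_splits) (metis order_trans)

lemma share_eq_1:
  assumes "i < n" "\<And>j. j < n \<Longrightarrow> j \<noteq> i \<Longrightarrow> dist_S y (x i) < dist_S y (x j)"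
  shows "share V E ends len n x i y = 1"
proof -
  let ?S = "{dist_S y (x j) | j. j < n}"
  have "Min ?S = dist_S y (x i)"
    using assms by (intro Min_eqI) (auto, metis order_less_imp_le order_refl)
  moreover have "j = i" if "j < n" "dist_S y (x j) = dist_S y (x i)" for j
    using assms(2) that by force
  ultimately have "closest V E ends len n x y = {x i}" "{j. j < n \<and> x j = x i} = {i}"
    using assms(1) unfolding closest_def Let_def by auto
  then show ?thesis by (simp add: share_def)
qed

lemma share_borel_measurable: "(\<lambda>t. share V E ends len n x i (Ip e t)) \<in> borel_measurable borel"
proof -
  define J where "J t = {j. j < n \<and> dist_S (Ip e t) (x j) = Min ((\<lambda>k. dist_S (Ip e t) (x k)) ` {..<n})}" for t
  define \<Phi> where "\<Phi> S = (if x i \<in> x ` S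
      then (1 / real (card (x ` S))) * (1 / real (card {j. j < n \<and> x j = x i})) else 0)" for S
  have "{dist_S (Ip e t) (x j) | j. j < n} = (\<lambda>k. dist_S (Ip e t) (x k)) ` {..<n}" for t
    by auto
  then have "closest V E ends len n x (Ip e t) = x ` J t" for t
    by (auto simp: closest_def J_def Let_def)
  then have "share V E ends len n x i (Ip e t) = \<Phi> (J t)" for t
    by (simp add: share_def \<Phi>_def)
  moreover have "J \<in> borel \<rightarrow>\<^sub>M count_space (Pow {..<n})"
    unfolding J_def by (rule measurable_argmin_set) (rule continuous_on_dist_S_edge)
  then have "(\<lambda>t. \<Phi> (J t)) \<in> borel_measurable borel"
    by (rule measurable_compose) (simp add: measurable_count_space_eq1)
  ultimately show ?thesis by simp
qed

lemma share_integrable: "(\<lambda>t. share V E ends len n x i (Ip e t)) integrable_on {a..b}"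
proof (rule measurable_bounded_by_integrable_imp_integrable_real)
  show "(\<lambda>t. share V E ends len n x i (Ip e t)) \<in> borel_measurable (lebesgue_on {a..b})"
    using measurable_compose[OF id_borel_measurable_lebesgue_on share_borel_measurable] by simp
  show "(\<lambda>t. 1::real) integrable_on {a..b}" by (rule has_integral_integrable[OF has_integral_const_real])
  show "\<bar>share V E ends len n x i (Ip e t)\<bar> \<le> 1" for t
    using share_nonneg share_le_1 by (simp add: abs_le_iff)
qed simp

lemma has_integral_seg_indicator:
  assumes vw: "valid_pt V E len w" and dw: "(e, b) \<in> dirs E ends w"
    and ac: "0 \<le> a" "a \<le> c" "c \<le> seg_len w e b"
  shows "((\<lambda>t. if a \<le> seg_coord w e b t \<and> seg_coord w e b t \<le> c then k else 0) has_integral k * (c - a)) {0..len e}"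
proof -
  let ?co = "coord ends len w e"
  define lo where "lo = (if b then ?co + a else ?co - c)"
  have "(\<lambda>t. if a \<le> seg_coord w e b t \<and> seg_coord w e b t \<le> c then k else 0)
      = (\<lambda>t. if lo \<le> t \<and> t \<le> lo + (c - a) then k else 0)"
    by (intro ext) (auto simp: seg_coord_def lo_def)
  moreover have "0 \<le> lo" "lo + (c - a) \<le> len e"
    using ac dir_coord_range[OF vw dw] by (auto simp: lo_def seg_len_def farc_def)
  ultimately show ?thesis using has_integral_indicator_Icc[of lo "lo + (c - a)" "len e" k] ac(2) by simp
qed

lemma has_integral_seg_indicator_open:
  assumes vw: "valid_pt V E len w" and dw: "(e, b) \<in> dirs E ends w"
    and ac: "0 \<le> a" "a \<le> c" "c \<le> seg_len w e b"
  shows "((\<lambda>t. if a < seg_coord w e b t \<and> seg_coord w e b t < c then k else 0) has_integral k * (c - a)) {0..len e}"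
proof -
  let ?co = "coord ends len w e"
  define lo where "lo = (if b then ?co + a else ?co - c)"
  have "(\<lambda>t. if a < seg_coord w e b t \<and> seg_coord w e b t < c then k else 0)
      = (\<lambda>t. if lo < t \<and> t < lo + (c - a) then k else 0)"
    by (intro ext) (auto simp: seg_coord_def lo_def)
  moreover have "0 \<le> lo" "lo + (c - a) \<le> len e"
    using ac dir_coord_range[OF vw dw] by (auto simp: lo_def seg_len_def farc_def)
  ultimately show ?thesis using has_integral_indicator_Ioo[of lo "lo + (c - a)" "len e" k] ac(2) by simp
qed

definition reach_count :: "(nat \<Rightarrow> ('v,'e) point) \<Rightarrow> nat \<Rightarrow> ('v,'e) point \<Rightarrow> 'e \<Rightarrow> real \<Rightarrow> real" where
  "reach_count x n w e t = (\<Sum>b | (e, b) \<in> dirs E ends w.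
     if 0 \<le> seg_coord w e b t \<and> seg_coord w e b t \<le> delta_along x {..<n} w e b then 1 else 0)"

lemma has_integral_reach_count:
  fixes x :: "nat \<Rightarrow> ('v,'e) point"
  assumes vp: "vertex_property V E ends n x" and vx: "\<And>j. j < n \<Longrightarrow> valid_pt V E len (x j)"
    and vw: "valid_pt V E len w"
  shows "(reach_count x n w e has_integral (\<Sum>b | (e, b) \<in> dirs E ends w. delta_along x {..<n} w e b)) {0..len e}"
  unfolding reach_count_def
proof (rule has_integral_sum, simp)
  fix b assume "b \<in> {b. (e, b) \<in> dirs E ends w}"
  then have d: "(e, b) \<in> dirs E ends w" by simp
  have vx': "\<And>j. j \<in> {..<n} \<Longrightarrow> valid_pt V E len (x j)" using vx by auto
  note guarded = guarded_if_vertex_property[OF vp vw d]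
  show "((\<lambda>t. if 0 \<le> seg_coord w e b t \<and> seg_coord w e b t \<le> delta_along x {..<n} w e b then 1 else 0)
      has_integral delta_along x {..<n} w e b) {0..len e}"
    using has_integral_seg_indicator[OF vw d, of 0 "delta_along x {..<n} w e b" 1]
      delta_along_pos[OF vw d finite_lessThan vx' guarded] delta_along_le_seg_len[OF vw d finite_lessThan vx' guarded]
    by simp
qed

text \<open>Each consumer attracted by x i is within reach of x i, and is shared by all players at x i.\<close>
lemma share_le_reach_count:
  fixes x :: "nat \<Rightarrow> ('v,'e) point"
  assumes vp: "vertex_property V E ends n x" and i: "i < n" and vx: "\<And>j. j < n \<Longrightarrow> valid_pt V E len (x j)"
    and e': "e' \<in> E" "0 < t" "t < len e'"
  shows "share V E ends len n x i (Ip e' t) \<le> reach_count x n (x i) e' t / real (card {j. j < n \<and> x j = x i})"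
proof (cases "x i \<in> closest V E ends len n x (Ip e' t)")
  case True
  obtain b where b: "(e', b) \<in> dirs E ends (x i)" "0 \<le> seg_coord (x i) e' b t"
      "seg_coord (x i) e' b t \<le> delta_along x {..<n} (x i) e' b"
    using closest_within_delta_along[OF vp i vx e'] closest_le[OF True] by auto
  then have "(if 0 \<le> seg_coord (x i) e' b t \<and> seg_coord (x i) e' b t \<le> delta_along x {..<n} (x i) e' b then 1 else 0)
      \<le> reach_count x n (x i) e' t"
    unfolding reach_count_def by (intro member_le_sum) auto
  then have "1 \<le> reach_count x n (x i) e' t" using b by simp
  then have "1 / real (card {j. j < n \<and> x j = x i}) \<le> reach_count x n (x i) e' t / real (card {j. j < n \<and> x j = x i})"
    by (rule divide_right_mono) simp
  then show ?thesis using share_le_if_closest[of n x i "Ip e' t"] True by simp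
next
  case False
  have "0 \<le> reach_count x n (x i) e' t" unfolding reach_count_def by (intro sum_nonneg) auto
  then have "0 \<le> reach_count x n (x i) e' t / real (card {j. j < n \<and> x j = x i})" by simp
  then show ?thesis using share_le_if_closest[of n x i "Ip e' t"] False by simp
qed

lemma integral_share_edge_le:
  fixes x :: "nat \<Rightarrow> ('v,'e) point"
  assumes vp: "vertex_property V E ends n x" and i: "i < n" and vx: "\<And>j. j < n \<Longrightarrow> valid_pt V E len (x j)"
    and e': "e' \<in> E"
  shows "integral {0..len e'} (\<lambda>t. share V E ends len n x i (Ip e' t))
     \<le> 1 / real (card {j. j < n \<and> x j = x i}) * (\<Sum>b | (e', b) \<in> dirs E ends (x i). delta_along x {..<n} (x i) e' b)"
proof -
  let ?k = "real (card {j. j < n \<and> x j = x i})"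
  let ?A = "\<Sum>b | (e', b) \<in> dirs E ends (x i). delta_along x {..<n} (x i) e' b"
  let ?f = "\<lambda>t. share V E ends len n x i (Ip e' t)" and ?g = "\<lambda>t. reach_count x n (x i) e' t / ?k"
  have "(reach_count x n (x i) e' has_integral ?A) {0..len e'}"
    by (rule has_integral_reach_count[OF vp vx vx[OF i]])
  then have "(?g has_integral ?A / ?k) {0..len e'}" by (rule has_integral_divide)
  then have g: "(?g has_integral ?A / ?k) {0<..<len e'}"
    using has_integral_open_interval[of ?g "?A / ?k" 0 "len e'"] by simp
  have f: "?f integrable_on {0<..<len e'}"
    using share_integrable integrable_on_open_interval_real by blast
  have "integral {0<..<len e'} ?f \<le> integral {0<..<len e'} ?g"
    using share_le_reach_count[OF vp i vx e'] by (intro integral_le[OF f has_integral_integrable[OF g]]) auto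
  also have "\<dots> = ?A / ?k" by (rule integral_unique[OF g])
  finally show ?thesis by (simp add: integral_open_interval_real)
qed

lemma payoff_le_sum_delta_along:
  fixes x :: "nat \<Rightarrow> ('v,'e) point"
  assumes vp: "vertex_property V E ends n x" and i: "i < n" and vx: "\<And>j. j < n \<Longrightarrow> valid_pt V E len (x j)"
  shows "payoff V E ends len n x i \<le>
     1 / real (card {j. j < n \<and> x j = x i}) * (\<Sum>(e, b) \<in> dirs E ends (x i). delta_along x {..<n} (x i) e b)"
proof -
  let ?c = "1 / real (card {j. j < n \<and> x j = x i})" and ?B = "\<lambda>e. {b. (e, b) \<in> dirs E ends (x i)}"
  have "payoff V E ends len n x i \<le> (\<Sum>e\<in>E. ?c * (\<Sum>b\<in>?B e. delta_along x {..<n} (x i) e b))"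
    unfolding payoff_def by (rule sum_mono) (rule integral_share_edge_le[OF vp i vx])
  also have "\<dots> = ?c * (\<Sum>e\<in>E. \<Sum>b\<in>?B e. delta_along x {..<n} (x i) e b)"
    by (simp add: sum_distrib_left)
  also have "\<dots> = ?c * (\<Sum>(e, b)\<in>Sigma E ?B. delta_along x {..<n} (x i) e b)"
    by (subst sum.Sigma) (auto simp: finite_E)
  also have "Sigma E ?B = dirs E ends (x i)" using dir_edge vx i by auto
  finally show ?thesis .
qed

context
  fixes w e b i n and x :: "nat \<Rightarrow> ('v,'e) point"
  assumes vw: "valid_pt V E len w" and dw: "(e, b) \<in> dirs E ends w"
    and i: "i < n" and vx: "\<And>j. j < n \<Longrightarrow> valid_pt V E len (x j)"
    and guarded: "guarded x ({..<n} - {i}) w e b"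
begin

lemma deviator_alone_closest:
  assumes "0 < \<epsilon>" "\<epsilon> < 2 * delta_along x ({..<n} - {i}) w e b"
    and s: "\<epsilon>/2 < seg_coord w e b t" "seg_coord w e b t < delta_along x ({..<n} - {i}) w e b + \<epsilon>/2"
  shows "share V E ends len n (x(i := Ip e (seg_pt w e b \<epsilon>))) i (Ip e t) = 1"
proof (rule share_eq_1[OF i])
  let ?A = "delta_along x ({..<n} - {i}) w e b" and ?s = "seg_coord w e b t"
  have vxJ: "\<And>j. j \<in> {..<n} - {i} \<Longrightarrow> valid_pt V E len (x j)" using vx by auto
  have y: "Ip e t = Ip e (seg_pt w e b ?s)" using seg_pt_coord by simp
  fix j assume j: "j < n" "j \<noteq> i"
  have "dist_S (Ip e t) (Ip e (seg_pt w e b \<epsilon>)) \<le> \<bar>?s - \<epsilon>\<bar>"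
    using dist_S_seg_pt_le_along[OF vw dw, of ?s "seg_pt w e b \<epsilon>"] y seg_pt_coord by simp
  moreover have "min ?s (2 * ?A - ?s) \<le> dist_S (Ip e t) (x j)"
    using dist_S_seg_pt_to_players_ge[OF vw dw _ vxJ guarded, where s = ?s] j y by auto
  moreover have "\<bar>?s - \<epsilon>\<bar> < min ?s (2 * ?A - ?s)" using s assms(1,2) by auto
  ultimately have "dist_S (Ip e t) (Ip e (seg_pt w e b \<epsilon>)) < dist_S (Ip e t) (x j)" by linarith
  then show "dist_S (Ip e t) ((x(i := Ip e (seg_pt w e b \<epsilon>))) i)
      < dist_S (Ip e t) ((x(i := Ip e (seg_pt w e b \<epsilon>))) j)"
    using j by simp
qed

lemma deviation_payoff_ge:
  assumes \<epsilon>: "0 < \<epsilon>" "\<epsilon> < seg_len w e b" "\<epsilon> < 2 * delta_along x ({..<n} - {i}) w e b"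
  shows "min (delta_along x ({..<n} - {i}) w e b) (seg_len w e b - \<epsilon>/2)
     \<le> payoff V E ends len n (x(i := Ip e (seg_pt w e b \<epsilon>))) i"
proof -
  let ?A = "delta_along x ({..<n} - {i}) w e b" and ?x' = "x(i := Ip e (seg_pt w e b \<epsilon>))"
  let ?c = "min (?A + \<epsilon>/2) (seg_len w e b)"
  let ?g = "\<lambda>t. if \<epsilon>/2 < seg_coord w e b t \<and> seg_coord w e b t < ?c then 1 else 0"
  have vxJ: "\<And>j. j \<in> {..<n} - {i} \<Longrightarrow> valid_pt V E len (x j)" using vx by auto
  have A: "0 < ?A" "?A \<le> seg_len w e b"
    using delta_along_pos[OF vw dw _ vxJ guarded] delta_along_le_seg_len[OF vw dw _ vxJ guarded] by auto
  have "(?g has_integral 1 * (?c - \<epsilon>/2)) {0..len e}"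
    using \<epsilon> A by (intro has_integral_seg_indicator_open[OF vw dw]) auto
  moreover have "?g t \<le> share V E ends len n ?x' i (Ip e t)" for t
    using deviator_alone_closest[OF \<epsilon>(1,3)] share_nonneg by auto
  ultimately have "?c - \<epsilon>/2 \<le> integral {0..len e} (\<lambda>t. share V E ends len n ?x' i (Ip e t))"
    using has_integral_le[OF _ integrable_integral[OF share_integrable]] by force
  also have "\<dots> \<le> payoff V E ends len n ?x' i"
    unfolding payoff_def
    by (rule member_le_sum[OF dir_edge[OF vw dw] _ finite_E]) (intro integral_nonneg share_integrable share_nonneg)
  finally show ?thesis by (simp add: min_diff_distrib_left)
qed

end

text \<open>Player i can move into any direction (e, b) at any location w and win almost the reach of w with
  respect to the other players.\<close>
lemma delta_along_le_payoff:
  fixes x :: "nat \<Rightarrow> ('v,'e) point"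
  assumes nash: "nash V E ends len n x" and i: "i < n"
    and vw: "valid_pt V E len w" and dw: "(e, b) \<in> dirs E ends w"
    and guarded: "guarded x ({..<n} - {i}) w e b"
  shows "delta_along x ({..<n} - {i}) w e b \<le> payoff V E ends len n x i"
proof -
  let ?A = "delta_along x ({..<n} - {i}) w e b"
  have vx: "\<And>j. j < n \<Longrightarrow> valid_pt V E len (x j)" using nash by (auto simp: nash_def)
  then have vxJ: "\<And>j. j \<in> {..<n} - {i} \<Longrightarrow> valid_pt V E len (x j)" by auto
  have A: "0 < ?A" "?A \<le> seg_len w e b"
    using delta_along_pos[OF vw dw _ vxJ guarded] delta_along_le_seg_len[OF vw dw _ vxJ guarded] by auto
  show ?thesis
  proof (rule le_of_min_le_approx[where \<epsilon>\<^sub>0 = "min (seg_len w e b) (2 * ?A)"])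
    fix \<epsilon> :: real assume \<epsilon>: "0 < \<epsilon>" "\<epsilon> < min (seg_len w e b) (2 * ?A)"
    then have "payoff V E ends len n (x(i := Ip e (seg_pt w e b \<epsilon>))) i \<le> payoff V E ends len n x i"
      using nash i valid_seg_pt[OF vw dw] by (auto simp: nash_def)
    moreover have "min ?A (seg_len w e b - \<epsilon>/2) \<le> payoff V E ends len n (x(i := Ip e (seg_pt w e b \<epsilon>))) i"
      using deviation_payoff_ge[OF vw dw i vx guarded] \<epsilon> by auto
    ultimately show "min ?A (seg_len w e b - \<epsilon>/2) \<le> payoff V E ends len n x i" by linarith
  qed (use A dir_props(1)[OF vw dw] in auto)
qed

section \<open>Equilibria with the vertex property\<close>

lemma on_seg_others_eq:
  assumes "valid_pt V E len (x i)" "(e, b) \<in> dirs E ends (x i)"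
  shows "{j \<in> {..<n} - {i}. on_seg ends len (x i) e b (x j)} = {j \<in> {..<n}. on_seg ends len (x i) e b (x j)}"
  using not_on_seg_self[OF assms] by auto

text \<open>At a saturated location the payoff bound averages the reaches over as many directions as there
  are players sharing them, while each reach is bounded by the payoff of a deviation.\<close>
lemma saturated_delta_along_eq_payoff:
  fixes x :: "nat \<Rightarrow> ('v,'e) point"
  assumes nash: "nash V E ends len n x" and vp: "vertex_property V E ends n x"
    and i: "i < n" and sat: "saturated V E ends len n x (x i)" and d: "(e, b) \<in> dirs E ends (x i)"
  shows "delta_along x {..<n} (x i) e b = payoff V E ends len n x i"
proof -
  let ?A = "\<lambda>(e, b). delta_along x {..<n} (x i) e b" and ?\<pi> = "payoff V E ends len n x i"
  have vx: "\<And>j. j < n \<Longrightarrow> valid_pt V E len (x j)" using nash by (auto simp: nash_def)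
  have vw: "valid_pt V E len (x i)" using vx i by auto
  have "?A eb \<le> ?\<pi>" if "eb \<in> dirs E ends (x i)" for eb
  proof (cases eb)
    case (Pair e' b')
    then have d': "(e', b') \<in> dirs E ends (x i)" using that by simp
    have "guarded x ({..<n} - {i}) (x i) e' b'"
      using guarded_if_vertex_property[OF vp vw d'] on_seg_others_eq[where x = x and i = i, OF vw d'] by (simp add: guarded_def)
    from delta_along_le_payoff[OF nash i vw d' this] show ?thesis
      using delta_along_cong[OF on_seg_others_eq[where x = x and i = i, OF vw d']] Pair by simp
  qed
  moreover have "card {j. j < n \<and> x j = x i} = card (dirs E ends (x i))"
    using sat card_dirs by (simp add: saturated_def)
  moreover have "0 < card (dirs E ends (x i))" using d finite_dirs card_gt_0_iff by blast
  ultimately have "real (card (dirs E ends (x i))) * ?\<pi> \<le> (\<Sum>eb\<in>dirs E ends (x i). ?A eb)"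
    using payoff_le_sum_delta_along[OF vp i vx] by (simp add: field_simps)
  then show ?thesis
    using sum_eq_bound_if_le_bound[where a = ?A and \<pi> = ?\<pi>, OF finite_dirs] \<open>\<And>eb. _ \<Longrightarrow> ?A eb \<le> ?\<pi>\<close> d
    by force
qed

context
  fixes n and x :: "nat \<Rightarrow> ('v,'e) point" and w and \<pi> :: real
  assumes vp: "vertex_property V E ends n x" and vx: "\<And>j. j < n \<Longrightarrow> valid_pt V E len (x j)"
    and vw: "valid_pt V E len w"
    and reach: "\<And>e b. (e, b) \<in> dirs E ends w \<Longrightarrow> delta_along x {..<n} w e b = \<pi>"
begin

lemma reach_empty_dir:
  assumes "(e, b) \<in> dirs E ends w" "{j \<in> {..<n}. on_seg ends len w e b (x j)} = {}"
  shows "seg_len w e b = \<pi>" "vdeg E ends (farv ends e b) = 1"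
  using delta_along_empty[OF vw assms(1) finite_lessThan _ guarded_if_vertex_property[OF vp vw assms(1)] assms(2)]
    reach[OF assms(1)] vx by auto

lemma reach_nonempty_dir:
  assumes "(e, b) \<in> dirs E ends w" "{j \<in> {..<n}. on_seg ends len w e b (x j)} \<noteq> {}"
  shows "2 * \<pi> \<le> seg_len w e b"
    and "\<And>j. j < n \<Longrightarrow> on_seg ends len w e b (x j) \<Longrightarrow> 2 * \<pi> \<le> seg_dist w e b (x j)"
  using delta_along_nonempty(1,3)[OF vw assms(1) finite_lessThan _ guarded_if_vertex_property[OF vp vw assms(1)] assms(2)]
    reach[OF assms(1)] vx by auto

lemma reach_on_seg_ge:
  "(e, b) \<in> dirs E ends w \<Longrightarrow> j < n \<Longrightarrow> on_seg ends len w e b (x j) \<Longrightarrow> 2 * \<pi> \<le> seg_dist w e b (x j)"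
  using reach_nonempty_dir(2) by blast

lemma reach_around_ge:
  assumes d: "(e, b) \<in> dirs E ends w" and j: "j < n"
  shows "2 * \<pi> \<le> seg_len w e b + dist_VS (farv ends e b) (x j)"
proof (cases "{j \<in> {..<n}. on_seg ends len w e b (x j)} = {}")
  case True
  then have "seg_len w e b \<le> dist_VS (farv ends e b) (x j)"
    using seg_len_le_dist_VS_from_leaf[OF vw d reach_empty_dir(2)[OF d True] vx[OF j]] j by auto
  then show ?thesis using reach_empty_dir(1)[OF d True] by linarith
next
  case False
  then show ?thesis using reach_nonempty_dir(1)[OF d] dist_VS_nonneg dir_props(5)[OF vw d] vx[OF j] by force
qed

lemma dist_S_from_Ip_ge:
  assumes w: "w = Ip e t" and j: "j < n" "x j \<noteq> w"
  shows "2 * \<pi> \<le> dist_S w (x j)"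
proof -
  have d: "(e, b) \<in> dirs E ends w" for b using w by (simp add: dirs_def)
  have co: "coord ends len w e = t" using w by (simp add: coord_def)
  have len: "seg_len w e b = (if b then len e - t else t)" for b
    using co vw w by (auto simp: seg_len_def farc_def)
  have "2 * \<pi> \<le> t + dist_VS (fst (ends e)) (x j)" "2 * \<pi> \<le> len e - t + dist_VS (snd (ends e)) (x j)"
    using reach_around_ge[OF d j(1), of False] reach_around_ge[OF d j(1), of True] by (simp_all add: len farv_def)
  moreover have "2 * \<pi> \<le> \<bar>t - s\<bar>" if xj: "x j = Ip e s" for s
  proof -
    have "seg_coord w e (t < s) s = \<bar>t - s\<bar>" "0 < \<bar>t - s\<bar>" using co xj j(2) w by (auto simp: seg_coord_def)
    then have "on_seg ends len w e (t < s) (x j)" using on_seg_iff[OF vw d vx[OF j(1)]] xj by auto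
    then have "2 * \<pi> \<le> seg_dist w e (t < s) (x j)" by (rule reach_on_seg_ge[OF d j(1)])
    then show ?thesis using xj \<open>seg_coord w e (t < s) s = _\<close> by (simp add: seg_dist_def)
  qed
  ultimately show ?thesis using w by (cases "x j") (auto simp: dist_S_Ip Let_def)
qed

text \<open>From a vertex w every walk leaves along a direction: either that direction holds a player, so the
  edge has length at least 2\<pi>, or it ends in a leaf of distance \<pi> and the walk has to come back.\<close>
lemma dist_V_from_Vx_ge:
  assumes w: "w = Vx v" and u: "u \<in> V" "u \<noteq> v"
    and guarded_u: "\<And>e b. (e, b) \<in> dirs E ends w \<Longrightarrow> u = farv ends e b \<Longrightarrow>
        {j \<in> {..<n}. on_seg ends len w e b (x j)} \<noteq> {}"
  shows "2 * \<pi> \<le> dist_V v u"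
proof (rule dist_V_greatest)
  show "v \<in> V" using vw w by simp
  fix l assume "nwalk v l u"
  then obtain e c l' where e: "e \<in> E" "ends e = (v, c) \<or> ends e = (c, v)" "nwalk c l' u" "l = len e + l'"
    using walk_first_edge u(2) by metis
  let ?b = "v = fst (ends e)"
  have d: "(e, ?b) \<in> dirs E ends w" and c: "farv ends e ?b = c" using dirs_VxI[OF e(1,2)] w by auto
  have len: "seg_len w e ?b = len e" using dir_props(3)[OF vw d] dir_Vx[OF vw d w] by simp
  show "2 * \<pi> \<le> l"
  proof (cases "{j \<in> {..<n}. on_seg ends len w e ?b (x j)} = {}")
    case True
    have "vdeg E ends c = 1" using reach_empty_dir(2)[OF d True] c by simp
    moreover have "ends e = (c, v) \<or> ends e = (v, c)" using e(2) by auto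
    ultimately obtain l'' where "nwalk v l'' u" "l' = len e + l''"
      using walk_from_leaf[OF _ e(1) _ e(3)] guarded_u[OF d] True c by metis
    then show ?thesis using walk_length_nonneg reach_empty_dir(1)[OF d True] len e(4) by fastforce
  next
    case False
    then show ?thesis using reach_nonempty_dir(1)[OF d] len e(4) walk_length_nonneg[OF e(3)] by simp
  qed
qed (use u in simp)

lemma dist_V_from_Vx_to_edge_ge:
  assumes w: "w = Vx v" and j: "j < n" and xj: "x j = Ip e' s"
    and y: "y = fst (ends e') \<and> \<beta> = s \<or> y = snd (ends e') \<and> \<beta> = len e' - s"
  shows "2 * \<pi> \<le> dist_V v y + \<beta>"
proof -
  have v: "v \<in> V" using vw w by simp
  have e': "e' \<in> E" "0 < s" "s < len e'" using vx[OF j] xj by auto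
  show ?thesis
  proof (cases "y = v")
    case True
    let ?b = "v = fst (ends e')"
    have d: "(e', ?b) \<in> dirs E ends w" using y True w e'(1) by (auto simp: dirs_def)
    have "seg_coord w e' ?b s = \<beta>" using y True w edge_wf(3)[OF e'(1)] by (auto simp: seg_coord_def coord_def)
    moreover have "0 < \<beta>" using y e' by auto
    ultimately have "2 * \<pi> \<le> \<beta>"
      using reach_on_seg_ge[OF d j] on_seg_iff[OF vw d vx[OF j]] xj by (simp add: seg_dist_def)
    then show ?thesis using True dist_V_self[OF v] by simp
  next
    case False
    have "{j \<in> {..<n}. on_seg ends len w e b (x j)} \<noteq> {}"
      if d: "(e, b) \<in> dirs E ends w" and "y = farv ends e b" for e b
    proof
      assume empty: "{j \<in> {..<n}. on_seg ends len w e b (x j)} = {}"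
      have "incident e' y" using y by (auto simp: incident_def)
      then have "e' = e"
        using leaf_edge_unique[OF _ dir_edge[OF vw d] dir_props(7)[OF vw d] e'(1)] reach_empty_dir(2)[OF d empty] \<open>y = _\<close>
        by simp
      then have "on_seg ends len w e b (x j)"
        using seg_coord_gt[OF vw d, of s] dir_Vx[OF vw d w] on_seg_iff[OF vw d vx[OF j]] xj vx[OF j] by auto
      then show False using empty j by auto
    qed
    then have "2 * \<pi> \<le> dist_V v y" using dist_V_from_Vx_ge[OF w _ False] y edge_wf[OF e'(1)] by auto
    then show ?thesis using y e' by auto
  qed
qed

lemma dist_S_from_Vx_ge:
  assumes w: "w = Vx v" and j: "j < n" "x j \<noteq> w"
  shows "2 * \<pi> \<le> dist_S w (x j)"
proof (cases "x j")
  case (Vx u)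
  have "{j \<in> {..<n}. on_seg ends len w e b (x j)} \<noteq> {}" if "u = farv ends e b" for e b
    using that j(1) Vx by (auto simp: on_seg_def)
  then have "2 * \<pi> \<le> dist_V v u" using dist_V_from_Vx_ge[OF w] vx[OF j(1)] j(2) w Vx by auto
  then show ?thesis using w Vx by (simp add: dist_S_Vx dist_VS_def)
next
  case (Ip e' s)
  then show ?thesis
    using dist_V_from_Vx_to_edge_ge[OF w j(1) Ip, of "fst (ends e')" s]
      dist_V_from_Vx_to_edge_ge[OF w j(1) Ip, of "snd (ends e')" "len e' - s"] w
    by (simp add: dist_S_Vx dist_VS_def)
qed

lemma dist_S_to_players_ge: "j < n \<Longrightarrow> x j \<noteq> w \<Longrightarrow> 2 * \<pi> \<le> dist_S w (x j)"
  using dist_S_from_Ip_ge dist_S_from_Vx_ge by (cases w) auto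

end

lemma saturated_delta_eq_payoff:
  fixes x :: "nat \<Rightarrow> ('v,'e) point"
  assumes nash: "nash V E ends len n x" and vp: "vertex_property V E ends n x"
    and i: "i < n" and sat: "saturated V E ends len n x (x i)" and d: "(e, b) \<in> dirs E ends (x i)"
  shows "delta V E ends len n x (x i) (e, b) = payoff V E ends len n x i"
proof -
  let ?w = "x i" and ?\<pi> = "payoff V E ends len n x i"
  let ?P = "{j. j < n \<and> on_seg ends len ?w e b (x j)}"
  have vx: "\<And>j. j < n \<Longrightarrow> valid_pt V E len (x j)" using nash by (auto simp: nash_def)
  then have vw: "valid_pt V E len ?w" and vx': "\<And>j. j \<in> {..<n} \<Longrightarrow> valid_pt V E len (x j)" using i by auto
  have reach: "\<And>e b. (e, b) \<in> dirs E ends ?w \<Longrightarrow> delta_along x {..<n} ?w e b = ?\<pi>"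
    using saturated_delta_along_eq_payoff[OF nash vp i sat] by blast
  note guarded = guarded_if_vertex_property[OF vp vw d]
  have P: "{j \<in> {..<n}. on_seg ends len ?w e b (x j)} = ?P" by auto
  show ?thesis
  proof (cases "vdeg E ends (farv ends e b) = 1 \<and> ?P = {}")
    case True
    then have "delta_along x {..<n} ?w e b = seg_len ?w e b"
      using delta_along_empty[OF vw d finite_lessThan vx' guarded] P by auto
    then show ?thesis using True reach[OF d] by (simp add: delta_def seg_len_def Let_def)
  next
    case False
    let ?S = "{dist_S ?w (x j) | j. j \<in> ?P}"
    have ne: "?P \<noteq> {}" using False guarded P by (auto simp: guarded_def)
    have "2 * ?\<pi> \<le> dist_S ?w (x j)" if "j \<in> ?P" for j
    proof -
      have "x j \<noteq> ?w" using that not_on_seg_self[OF vw d] by auto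
      then show ?thesis using dist_S_to_players_ge[OF vp vx vw reach] that by auto
    qed
    then have "2 * ?\<pi> \<le> Min ?S" using ne by (subst Min_ge_iff) auto
    moreover obtain j0 where j0: "j0 < n" "on_seg ends len ?w e b (x j0)" "seg_dist ?w e b (x j0) = 2 * ?\<pi>"
      using delta_along_nonempty(4)[OF vw d finite_lessThan vx' guarded] ne P reach[OF d] by auto
    then have "Min ?S \<le> dist_S ?w (x j0)" by (intro Min_le) auto
    then have "Min ?S \<le> 2 * ?\<pi>" using dist_S_le_seg_dist[OF vw d vx[OF j0(1)] j0(2)] j0(3) by linarith
    moreover have "delta V E ends len n x ?w (e, b) = Min ?S / 2"
      by (simp only: delta_def Let_def prod.case if_not_P[OF False])
    ultimately show ?thesis by simp
  qed
qed

text \<open>A vertex of degree at least 3 that is saturated keeps a player when one of its players leaves.\<close>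
lemma guarded_without_saturated_player:
  fixes x :: "nat \<Rightarrow> ('v,'e) point"
  assumes vp: "vertex_property V E ends n x" and sat: "saturated V E ends len n x (x i)"
    and vw: "valid_pt V E len w" and d: "(e, b) \<in> dirs E ends w"
  shows "guarded x ({..<n} - {i}) w e b"
proof -
  let ?z = "farv ends e b"
  consider "vdeg E ends ?z = 1" | j where "j < n" "x j = Vx ?z" "vdeg E ends ?z \<noteq> 1"
    using far_leaf_or_occupied[OF vp vw d] by blast
  then show ?thesis
  proof cases
    case 2
    have "vdeg E ends ?z \<noteq> 2" using network dir_props(5)[OF vw d] by (auto simp: network_def)
    then have "3 \<le> vdeg E ends ?z" using 2(3) vdeg_pos[OF dir_edge[OF vw d] dir_props(7)[OF vw d]] by linarith
    have "\<exists>j'. j' < n \<and> j' \<noteq> i \<and> x j' = Vx ?z"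
    proof (cases "j = i")
      case True
      then have "card {j. j < n \<and> x j = Vx ?z} = vdeg E ends ?z" using sat 2(2) by (simp add: saturated_def)
      then have "\<not> {j. j < n \<and> x j = Vx ?z} \<subseteq> {i}"
        using \<open>3 \<le> vdeg E ends ?z\<close> card_mono[of "{i}" "{j. j < n \<and> x j = Vx ?z}"] by auto
      then show ?thesis by auto
    qed (use 2 in auto)
    then show ?thesis using guardedI_occupied[of _ "{..<n} - {i}"] by blast
  qed (simp add: guarded_def)
qed

text \<open>A player of one saturated location can step next to another saturated location, where the reach
  only grows when that player leaves.\<close>
lemma saturated_payoff_le:
  fixes x :: "nat \<Rightarrow> ('v,'e) point"
  assumes nash: "nash V E ends len n x" and vp: "vertex_property V E ends n x"
    and i1: "i1 < n" "saturated V E ends len n x (x i1)"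
    and i2: "i2 < n" "saturated V E ends len n x (x i2)"
  shows "payoff V E ends len n x i2 \<le> payoff V E ends len n x i1"
proof -
  have vx: "\<And>j. j < n \<Longrightarrow> valid_pt V E len (x j)" using nash by (auto simp: nash_def)
  then have vw: "valid_pt V E len (x i2)" using i2 by auto
  obtain e b where d: "(e, b) \<in> dirs E ends (x i2)" using saturated_dirs_nonempty[OF i2(2) i2(1)] by auto
  note guarded = guarded_without_saturated_player[OF vp i1(2) vw d]
  have "delta_along x {..<n} (x i2) e b \<le> delta_along x ({..<n} - {i1}) (x i2) e b"
    using vx by (intro delta_along_antimono[OF vw d _ _ _ guarded]) auto
  also have "\<dots> \<le> payoff V E ends len n x i1" using delta_along_le_payoff[OF nash i1(1) vw d guarded] .
  finally show ?thesis using saturated_delta_along_eq_payoff[OF nash vp i2 d] by simp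
qed

lemma saturated_payoff_pos:
  fixes x :: "nat \<Rightarrow> ('v,'e) point"
  assumes nash: "nash V E ends len n x" and vp: "vertex_property V E ends n x"
    and i: "i < n" "saturated V E ends len n x (x i)"
  shows "0 < payoff V E ends len n x i"
proof -
  have vx: "\<And>j. j < n \<Longrightarrow> valid_pt V E len (x j)" using nash by (auto simp: nash_def)
  then have vw: "valid_pt V E len (x i)" using i by auto
  obtain e b where d: "(e, b) \<in> dirs E ends (x i)" using saturated_dirs_nonempty[OF i(2) i(1)] by auto
  have "0 < delta_along x {..<n} (x i) e b"
    using vx by (intro delta_along_pos[OF vw d _ _ guarded_if_vertex_property[OF vp vw d]]) auto
  then show ?thesis using saturated_delta_along_eq_payoff[OF nash vp i d] by simp
qed

lemma saturated_occupied:
  assumes "saturated V E ends len n x w" "eb \<in> dirs E ends w"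
  obtains i where "i < n" "x i = w"
proof -
  have "0 < card (dirs E ends w)" using assms(2) finite_dirs card_gt_0_iff by blast
  then have "card {i. i < n \<and> x i = w} \<noteq> 0" using assms(1) card_dirs by (simp add: saturated_def)
  then show ?thesis using that by (metis (mono_tags, lifting) card.empty empty_Collect_eq)
qed

end

theorem mainTheorem9:
  fixes V :: "'v set" and E :: "'e set" and ends :: "'e \<Rightarrow> 'v \<times> 'v" and len :: "'e \<Rightarrow> real"
    and n :: nat and x :: "nat \<Rightarrow> ('v,'e) point"
  assumes "network V E ends len"
    and "nash V E ends len n x"
    and "vertex_property V E ends n x"
  shows "\<exists>\<xi>>0. (\<forall>w. saturated V E ends len n x w \<longrightarrow>
                    (\<forall>eb\<in>dirs E ends w. delta V E ends len n x w eb = \<xi>)) \<and>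
              (\<forall>i<n. saturated V E ends len n x (x i) \<longrightarrow> payoff V E ends len n x i = \<xi>)"
proof -
  interpret metric_network V E ends len using assms(1) by unfold_locales
  note nash = assms(2) and vp = assms(3)
  show ?thesis
  proof (cases "\<exists>i0<n. saturated V E ends len n x (x i0)")
    case False
    then show ?thesis by (metis saturated_occupied zero_less_one)
  next
    case True
    then obtain i0 where i0: "i0 < n" "saturated V E ends len n x (x i0)" by blast
    let ?\<xi> = "payoff V E ends len n x i0"
    have payoff: "payoff V E ends len n x i = ?\<xi>" if "i < n" "saturated V E ends len n x (x i)" for i
      using saturated_payoff_le[OF nash vp i0 that] saturated_payoff_le[OF nash vp that i0] by linarith
    have "delta V E ends len n x w (e, b) = ?\<xi>"
      if sat: "saturated V E ends len n x w" and d: "(e, b) \<in> dirs E ends w" for w e b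
    proof -
      obtain i where i: "i < n" "x i = w" using saturated_occupied[OF sat d] .
      then show ?thesis using saturated_delta_eq_payoff[OF nash vp i(1)] payoff[OF i(1)] sat d by auto
    qed
    then show ?thesis using saturated_payoff_pos[OF nash vp i0] payoff by auto
  qed
qed

end
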